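(* Assume (A1)–(A4) from the context. Let $0<\alpha<1/\rho$ (with $1/\rho=+\infty$ if $\rho=0$), and let $\beta>0$ satisfy $24K(K-1)L^2\beta^2\le1$. Set $\delta=1/(1-\alpha\rho)^2$. Then for every $t\ge0$ the iterates generated by FedCanon satisfy $$\begin{aligned}\mathbb{E}[\phi(z^{t+1})-\phi(z^t)]\le&-\frac{\alpha-2(\rho+L)\alpha^2}{4}\mathbb{E}\Vert G^\alpha(z^t,\bar\Delta^{t+1})\Vert^2-\frac\alpha8\mathbb{E}\Vert G^\alpha(z^t)\Vert^2\\&-\left[\frac{\alpha}{16}-12(2+\delta)\alpha\beta^2K^2L^2\right]\mathbb{E}\Vert\nabla f(z^t)\Vert^2+\frac{\alpha B_h}{8}\\&+12(2+\delta)\alpha\beta^2K^2L^2\,\mathcal{E}^t+\frac{\alpha(2+\delta)(1+3\beta^2K^3L^2)\sigma^2}{BK}.\end{aligned}$$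
   Context: Let $N,d,K,B$ be positive integers and $[N]=\{1,\dots,N\}$. For each $i\in[N]$ let $f_i(x)=\mathbb{E}_{\xi\sim\mathcal{D}_i}[F_i(x;\xi)]$. Let $f=\frac1N\sum_if_i$, let $h:\mathbb{R}^d\to\mathbb{R}\cup\{+\infty\}$, and let $\phi=f+h$. Standing assumptions: (A1) $\phi^*:=\inf\phi>-\infty$. (A2) There is $L>0$ such that for every $i$ and all $x,y$: $f_i(x)-f_i(y)-\langle\nabla f_i(y),x-y\rangle\le\frac L2\Vert x-y\Vert^2$ and $\Vert\nabla f_i(x)-\nabla f_i(y)\Vert\le L\Vert x-y\Vert$. (A3) $h$ is proper, closed and $\rho$-weakly convex for some $\rho\ge0$ ($h+\frac\rho2\Vert\cdot\Vert^2$ convex). There is $B_h$ with $\Vert h'(z)\Vert^2\le B_h$ for every $z$ and every $h'(z)\in\partial h(z)$. (A4) Each evaluation $g_i(x)=\frac1B\sum_{b=1}^B\nabla F_i(x;\xi_{i,b})$ uses $B$ fresh samples from $\mathcal{D}_i$, independent of the past. Conditionally on the past, $\mathbb{E}[g_i(x)]=\nabla f_i(x)$ and $\mathbb{E}\Vert g_i(x)-\nabla f_i(x)\Vert^2\le\sigma^2/B$. $\mathbf{prox}_{\alpha h}\{y\}=\arg\min_x\{h(x)+\frac1{2\alpha}\Vert x-y\Vert^2\}$. Algorithm FedCanon. The inputs are $\alpha,\beta>0$, an initial point $z^0$, and $c_i^0$ with $\sum_ic_i^0=\mathbf{0}_d$. For $t=0,1,\dots$: - set $\hat x_i^{t,0}=z^t$;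 - update $\hat x_i^{t,k+1}=\hat x_i^{t,k}-\beta[g_i(\hat x_i^{t,k})+c_i^t]$ for $k=0,\dots,K-1$; - form $\Delta_i^{t+1}=\frac1{\beta K}(z^t-\hat x_i^{t,K})$ and $\bar\Delta^{t+1}=\frac1N\sum_i\Delta_i^{t+1}$; - set $z^{t+1}=\mathbf{prox}_{\alpha h}\{z^t-\alpha\bar\Delta^{t+1}\}$; - update $c_i^{t+1}=c_i^t+\bar\Delta^{t+1}-\Delta_i^{t+1}$. Notation: - $G^\alpha(z,u)=\frac1\alpha(z-\mathbf{prox}_{\alpha h}\{z-\alpha u\})$ and $G^\alpha(z)=G^\alpha(z,\nabla f(z))$. - $v_i^t=\frac1K\sum_{k=0}^{K-1}g_i(\hat x_i^{t,k})$ and $\bar v^t=\frac1N\sum_iv_i^t$. - $\mathcal{E}^t=\frac1N\sum_i\mathbb{E}\Vert\nabla f_i(z^t)+c_i^t-\nabla f(z^t)\Vert^2$. For $t\ge1$ this equals $\frac1N\sum_i\mathbb{E}\Vert\nabla f_i(\hat x_i^{t,0})-v_i^{t-1}-\nabla f(z^t)+\bar v^{t-1}\Vert^2$. - $\mathbb{E}$ is expectation over all sampling. *)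

theory Defs
  imports "HOL-Probability.Probability"
begin

text \<open>Proximal operator: the (unique, when 0 < alpha < 1/rho) minimiser of
  h x + 1/(2 alpha) norm (x - y)^2.\<close>
definition prox :: "real \<Rightarrow> ('a::real_normed_vector \<Rightarrow> real) \<Rightarrow> 'a \<Rightarrow> 'a" where
  "prox \<alpha> h y = (SOME x. \<forall>w. h x + (norm (x - y))\<^sup>2 / (2 * \<alpha>) \<le> h w + (norm (w - y))\<^sup>2 / (2 * \<alpha>))"

definition Gmap :: "real \<Rightarrow> ('a::real_normed_vector \<Rightarrow> real) \<Rightarrow> 'a \<Rightarrow> 'a \<Rightarrow> 'a" where
  "Gmap \<alpha> h z u = (1 / \<alpha>) *\<^sub>R (z - prox \<alpha> h (z - \<alpha> *\<^sub>R u))"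

definition frechet_subdiff :: "('a::real_inner \<Rightarrow> real) \<Rightarrow> 'a \<Rightarrow> 'a set" where
  "frechet_subdiff h z = {v. \<forall>e>0. eventually (\<lambda>y. h y \<ge> h z + v \<bullet> (y - z) - e * norm (y - z)) (at z)}"

definition sgrad :: "(nat \<Rightarrow> 'a::real_vector \<Rightarrow> 'b \<Rightarrow> 'a) \<Rightarrow> nat \<Rightarrow> nat \<Rightarrow> 'a \<Rightarrow> (nat \<Rightarrow> 'b) \<Rightarrow> 'a" where
  "sgrad gF B i x s = (1 / real B) *\<^sub>R (\<Sum>b<B. gF i x (s b))"

text \<open>Local iterates hat x_i^{t,k}; s k b is the b-th sample used at local step k.\<close>
primrec local_pt :: "(nat \<Rightarrow> 'a::real_vector \<Rightarrow> 'b \<Rightarrow> 'a) \<Rightarrow> nat \<Rightarrow> real \<Rightarrow> 'a \<Rightarrow> nat \<Rightarrow> 'a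
    \<Rightarrow> (nat \<Rightarrow> nat \<Rightarrow> 'b) \<Rightarrow> nat \<Rightarrow> 'a" where
  "local_pt gF B \<beta> c i z s 0 = z"
| "local_pt gF B \<beta> c i z s (Suc k) =
     local_pt gF B \<beta> c i z s k - \<beta> *\<^sub>R (sgrad gF B i (local_pt gF B \<beta> c i z s k) (s k) + c)"

definition fc_delta :: "(nat \<Rightarrow> 'a::real_vector \<Rightarrow> 'b \<Rightarrow> 'a) \<Rightarrow> nat \<Rightarrow> real \<Rightarrow> nat \<Rightarrow> 'a \<Rightarrow> nat \<Rightarrow> 'a
    \<Rightarrow> (nat \<Rightarrow> nat \<Rightarrow> 'b) \<Rightarrow> 'a" where
  "fc_delta gF B \<beta> K c i z s = (1 / (\<beta> * real K)) *\<^sub>R (z - local_pt gF B \<beta> c i z s K)"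

text \<open>bar Delta^{t+1}, from the state (z^t, c^t) and the round-t samples st i k b.\<close>
definition fc_Dbar :: "(nat \<Rightarrow> 'a::real_vector \<Rightarrow> 'b \<Rightarrow> 'a) \<Rightarrow> nat \<Rightarrow> real \<Rightarrow> nat \<Rightarrow> nat
    \<Rightarrow> 'a \<times> (nat \<Rightarrow> 'a) \<Rightarrow> (nat \<Rightarrow> nat \<Rightarrow> nat \<Rightarrow> 'b) \<Rightarrow> 'a" where
  "fc_Dbar gF B \<beta> K N st smp =
     (1 / real N) *\<^sub>R (\<Sum>i<N. fc_delta gF B \<beta> K (snd st i) i (fst st) (smp i))"

text \<open>FedCanon state (z^t, c^t); xi t i k b is the b-th sample of client i at local step k of round t.\<close>
primrec fedcanon :: "(nat \<Rightarrow> 'a::real_normed_vector \<Rightarrow> 'b \<Rightarrow> 'a) \<Rightarrow> nat \<Rightarrow> real \<Rightarrow> real \<Rightarrow> nat \<Rightarrow> nat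
    \<Rightarrow> ('a \<Rightarrow> real) \<Rightarrow> 'a \<Rightarrow> (nat \<Rightarrow> 'a) \<Rightarrow> (nat \<Rightarrow> nat \<Rightarrow> nat \<Rightarrow> nat \<Rightarrow> 'b) \<Rightarrow> nat
    \<Rightarrow> 'a \<times> (nat \<Rightarrow> 'a)" where
  "fedcanon gF B \<alpha> \<beta> K N h z0 c0 \<xi> 0 = (z0, c0)"
| "fedcanon gF B \<alpha> \<beta> K N h z0 c0 \<xi> (Suc t) =
     (let st = fedcanon gF B \<alpha> \<beta> K N h z0 c0 \<xi> t;
          z = fst st; c = snd st;
          Db = fc_Dbar gF B \<beta> K N st (\<xi> t)
      in (prox \<alpha> h (z - \<alpha> *\<^sub>R Db),
          \<lambda>i. c i + Db - fc_delta gF B \<beta> K (c i) i z (\<xi> t i)))"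

end

theory Submission
  imports Defs
begin

(* The server update is a proximal-gradient step with the inexact direction bar Delta. The
   quadratic growth of the prox objective of the weakly convex h gives a deterministic descent
   inequality in which the error e = bar Delta - grad f(z) enters with weight alpha (2 + delta) / 2,
   delta being the square of the Lipschitz constant 1 / (1 - alpha rho) of the prox. Since the
   controls sum to zero, e is the average of the client errors Delta_i - grad f_i(z) - c_i, each
   the sum of averaged sampling noise and a drift term bounded by L |x_i^{t,k} - z|. Each noise
   term is a fresh sample evaluated at a point that depends only on other samples, so the noise
   terms are uncorrelated and the sum of k B of them has second moment at most k B sigma^2. The
   drift then satisfies a recursive bound, which the step size condition
   24 K (K - 1) L^2 beta^2 <= 1 closes. *)

lemma norm_sq_convex_comb:
  fixes p w y :: "'a::real_inner"
  shows "(norm ((1 - t) *\<^sub>R p + t *\<^sub>R w - y))\<^sup>2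
     = (1 - t) * (norm (p - y))\<^sup>2 + t * (norm (w - y))\<^sup>2 - t * (1 - t) * (norm (w - p))\<^sup>2"
proof -
  have "(1 - t) *\<^sub>R p + t *\<^sub>R w - y = (1 - t) *\<^sub>R (p - y) + t *\<^sub>R (w - y)"
    by (simp add: algebra_simps)
  moreover have "w - p = (w - y) - (p - y)" by simp
  ultimately show ?thesis
    unfolding power2_norm_eq_inner by (simp add: inner_simps algebra_simps power2_eq_square)
qed

lemma norm_add_sq_le:
  fixes a b :: "'a::real_normed_vector"
  shows "(norm (a + b))\<^sup>2 \<le> 2 * (norm a)\<^sup>2 + 2 * (norm b)\<^sup>2"
proof -
  have "(norm (a + b))\<^sup>2 \<le> (norm a + norm b)\<^sup>2" by (intro power_mono norm_triangle_ineq) auto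
  also have "\<dots> \<le> 2 * (norm a)\<^sup>2 + 2 * (norm b)\<^sup>2"
    using sum_squared_le_sum_of_squares[of "\<lambda>s. if s then norm a else norm b" UNIV]
    by (simp add: UNIV_bool add.commute)
  finally show ?thesis .
qed

lemma norm_sum_sq_le:
  fixes v :: "'i \<Rightarrow> 'a::real_normed_vector"
  shows "(norm (\<Sum>j\<in>S. v j))\<^sup>2 \<le> real (card S) * (\<Sum>j\<in>S. (norm (v j))\<^sup>2)"
proof -
  have "(norm (\<Sum>j\<in>S. v j))\<^sup>2 \<le> (\<Sum>j\<in>S. norm (v j))\<^sup>2" by (intro power_mono norm_sum) auto
  also have "\<dots> \<le> (\<Sum>j\<in>S. (norm (v j))\<^sup>2) * card S" by (rule sum_squared_le_sum_of_squares)
  finally show ?thesis by (simp add: mult.commute)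
qed

lemma norm_add3_sq_le:
  fixes a b c :: "'a::real_normed_vector"
  shows "(norm (a + b + c))\<^sup>2 \<le> 3 * ((norm a)\<^sup>2 + (norm b)\<^sup>2 + (norm c)\<^sup>2)"
  using norm_sum_sq_le[of "\<lambda>j. [a, b, c] ! j" "{0, 1, 2}"] by (simp add: add.assoc)

lemma abs_inner_le_norm_sq_add:
  fixes x y :: "'a::real_inner"
  shows "\<bar>x \<bullet> y\<bar> \<le> (norm x)\<^sup>2 + (norm y)\<^sup>2"
proof -
  have "\<bar>x \<bullet> y\<bar> \<le> norm x * norm y" by (rule Cauchy_Schwarz_ineq2)
  also have "\<dots> \<le> (norm x)\<^sup>2 + (norm y)\<^sup>2"
    using power2_diff[of "norm x" "norm y"] zero_le_power2[of "norm x - norm y"]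
      mult_nonneg_nonneg[OF norm_ge_zero norm_ge_zero, of x y] by linarith
  finally show ?thesis .
qed

lemma inner_le_norm_sq_add_quarter:
  fixes x y :: "'a::real_inner"
  shows "x \<bullet> y \<le> (norm x)\<^sup>2 + (norm y)\<^sup>2 / 4"
proof -
  have "0 \<le> (norm (x - (1/2) *\<^sub>R y))\<^sup>2" by simp
  also have "\<dots> = (norm x)\<^sup>2 - x \<bullet> y + (norm y)\<^sup>2 / 4"
    by (simp add: power2_norm_eq_inner inner_simps inner_commute algebra_simps)
  finally show ?thesis by simp
qed

lemma nonpos_if_le_small_multiples:
  fixes E c :: real
  assumes "\<And>t. 0 < t \<Longrightarrow> t < 1 \<Longrightarrow> E \<le> t * c" and "c \<ge> 0"
  shows "E \<le> 0"
proof (rule ccontr)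
  assume "\<not> E \<le> 0"
  define t where "t = min (1/2) (E / (2 * c + 1))"
  have t: "0 < t" "t < 1" using \<open>\<not> E \<le> 0\<close> assms(2) by (auto simp: t_def)
  have "t * c \<le> E / (2 * c + 1) * c" using assms(2) by (intro mult_right_mono) (auto simp: t_def)
  also have "\<dots> < E" using \<open>\<not> E \<le> 0\<close> assms(2) by (simp add: field_simps add_pos_nonneg)
  finally show False using assms(1)[OF t] by simp
qed

section \<open>Proximal operator of a weakly convex function\<close>

lemma convex_on_linear_lower_bound:
  fixes g :: "'a::euclidean_space \<Rightarrow> real"
  assumes "convex_on UNIV g"
  obtains C0 C1 where "C1 \<ge> 0" "\<And>x. C0 - C1 * norm x \<le> g x"
proof -
  have "continuous_on (cball 0 1) g"
    using convex_on_continuous[OF open_UNIV assms] by (rule continuous_on_subset) simp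
  then obtain m0 where m0: "m0 \<in> cball 0 1" "\<And>y. y \<in> cball 0 1 \<Longrightarrow> g m0 \<le> g y"
    using continuous_attains_inf[OF compact_cball] by (metis centre_in_cball empty_iff zero_le_one)
  define C1 where "C1 = \<bar>g m0 - g 0\<bar>"
  have "g m0 - C1 - C1 * norm x \<le> g x" for x
  proof (cases "norm x \<le> 1")
    case True
    then have "g m0 \<le> g x" by (intro m0(2)) simp
    moreover have "0 \<le> C1" "0 \<le> C1 * norm x" by (simp_all add: C1_def)
    ultimately show ?thesis by linarith
  next
    case False
    define l where "l = 1 / norm x"
    have l: "0 < l" "l < 1" using False by (auto simp: l_def divide_less_eq)
    have "g m0 \<le> g (l *\<^sub>R x)" using False by (intro m0(2)) (simp add: l_def)
    also have "g (l *\<^sub>R x) = g ((1 - l) *\<^sub>R 0 + l *\<^sub>R x)" by simp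
    also have "\<dots> \<le> (1 - l) * g 0 + l * g x"
      using assms l by (intro convex_onD) auto
    finally have "norm x * g m0 \<le> norm x * ((1 - l) * g 0 + l * g x)"
      by (intro mult_left_mono) auto
    also have "\<dots> = (norm x - 1) * g 0 + g x"
      using False by (simp add: l_def algebra_simps)
    finally have "(g m0 - g 0) * norm x + g 0 \<le> g x" by (simp add: algebra_simps)
    moreover have c: "- C1 \<le> g m0 - g 0" "g m0 - C1 \<le> g 0" by (simp_all add: C1_def)
    moreover have "- C1 * norm x \<le> (g m0 - g 0) * norm x" using c(1) by (rule mult_right_mono) simp
    ultimately show ?thesis by linarith
  qed
  then show ?thesis using that[of C1 "g m0 - C1"] by (simp add: C1_def)
qed

locale weakly_convex_prox =
  fixes h :: "'a::euclidean_space \<Rightarrow> real" and \<rho> \<alpha> :: real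
  assumes alpha_pos: "\<alpha> > 0" and alpha_rho: "\<alpha> * \<rho> < 1"
    and weakly_convex: "convex_on UNIV (\<lambda>x. h x + \<rho> / 2 * (norm x)\<^sup>2)"
begin

definition prox_obj :: "'a \<Rightarrow> 'a \<Rightarrow> real" where
  "prox_obj y x = h x + (norm (x - y))\<^sup>2 / (2 * \<alpha>)"

lemma continuous_on_h: "continuous_on UNIV h"
proof -
  have "continuous_on UNIV (\<lambda>x. (h x + \<rho> / 2 * (norm x)\<^sup>2) - \<rho> / 2 * (norm x)\<^sup>2)"
    by (intro continuous_intros convex_on_continuous[OF open_UNIV weakly_convex])
  then show ?thesis by simp
qed

lemma prox_obj_coercive: "\<exists>R. \<forall>x. norm x > R \<longrightarrow> prox_obj y x > prox_obj y y"
proof -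
  obtain C0 C1 where C1: "C1 \<ge> 0" and lower: "\<And>x. C0 - C1 * norm x \<le> h x + \<rho> / 2 * (norm x)\<^sup>2"
    using convex_on_linear_lower_bound[OF weakly_convex] by blast
  define \<mu> where "\<mu> = (1 / \<alpha> - \<rho>) / 2"
  define C2 where "C2 = C1 + norm y / \<alpha>"
  define c where "c = C2 + \<bar>prox_obj y y - C0\<bar>"
  have \<mu>: "\<mu> > 0" using alpha_rho alpha_pos by (simp add: \<mu>_def field_simps)
  have c: "c \<ge> 0" using C1 alpha_pos by (simp add: c_def C2_def)
  have "prox_obj y x > prox_obj y y" if x: "norm x > c / \<mu> + 1" for x
  proof -
    define r where "r = norm x"
    have "c / \<mu> \<ge> 0" using \<mu> c by simp
    then have r1: "r \<ge> 1" using x by (simp add: r_def)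
    have "\<mu> * r > \<mu> * (c / \<mu> + 1)" using x \<mu> by (simp add: r_def)
    moreover have "\<mu> * (c / \<mu> + 1) = c + \<mu>" using \<mu> by (simp add: field_simps)
    ultimately have "\<mu> * r > c" using \<mu> by linarith
    note r = r1 this
    have "(r - norm y)\<^sup>2 \<le> (norm (x - y))\<^sup>2"
      by (metis abs_ge_zero norm_triangle_ineq3 power2_abs power_mono r_def)
    then have "(r - norm y)\<^sup>2 / (2 * \<alpha>) \<le> (norm (x - y))\<^sup>2 / (2 * \<alpha>)"
      using alpha_pos by (intro divide_right_mono) auto
    moreover have "r\<^sup>2 / (2 * \<alpha>) - r * norm y / \<alpha> \<le> (r - norm y)\<^sup>2 / (2 * \<alpha>)"
      using alpha_pos by (simp add: power2_diff field_simps)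
    moreover have "C0 - C1 * r - \<rho> / 2 * r\<^sup>2 \<le> h x" using lower[of x] by (simp add: r_def)
    ultimately have "C0 - C1 * r - \<rho> / 2 * r\<^sup>2 + r\<^sup>2 / (2 * \<alpha>) - r * norm y / \<alpha> \<le> prox_obj y x"
      unfolding prox_obj_def by linarith
    moreover have "C0 - C1 * r - \<rho> / 2 * r\<^sup>2 + r\<^sup>2 / (2 * \<alpha>) - r * norm y / \<alpha> = C0 + \<mu> * r * r - C2 * r"
      using alpha_pos by (simp add: \<mu>_def C2_def field_simps power2_eq_square)
    moreover have "c * r < \<mu> * r * r" using r by (intro mult_strict_right_mono) auto
    moreover have "C2 * r + \<bar>prox_obj y y - C0\<bar> \<le> c * r"
      using r(1) mult_left_mono[OF r(1), of "\<bar>prox_obj y y - C0\<bar>"] by (simp add: c_def algebra_simps)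
    ultimately show ?thesis by linarith
  qed
  then show ?thesis by blast
qed

lemma prox_obj_has_min: "\<exists>p. \<forall>w. prox_obj y p \<le> prox_obj y w"
proof -
  obtain R where R: "\<And>x. norm x > R \<Longrightarrow> prox_obj y x > prox_obj y y"
    using prox_obj_coercive by blast
  define S where "S = cball (0::'a) (max R (norm y))"
  have "y \<in> S" by (simp add: S_def)
  have "continuous_on S (prox_obj y)"
    unfolding prox_obj_def using alpha_pos
    by (intro continuous_intros continuous_on_subset[OF continuous_on_h]) auto
  then obtain p where p: "p \<in> S" "\<forall>w\<in>S. prox_obj y p \<le> prox_obj y w"
    using continuous_attains_inf[of S "prox_obj y"] \<open>y \<in> S\<close> by (auto simp: S_def)
  have "prox_obj y p \<le> prox_obj y w" for w
  proof (cases "w \<in> S")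
    case False
    then have "prox_obj y w > prox_obj y y" by (intro R) (simp add: S_def)
    then show ?thesis using p(2) \<open>y \<in> S\<close> by force
  qed (use p in blast)
  then show ?thesis by blast
qed

lemma prox_minimal: "prox_obj y (prox \<alpha> h y) \<le> prox_obj y w"
proof -
  have "\<exists>x. \<forall>w. h x + (norm (x - y))\<^sup>2 / (2 * \<alpha>) \<le> h w + (norm (w - y))\<^sup>2 / (2 * \<alpha>)"
    using prox_obj_has_min[of y] unfolding prox_obj_def .
  then show ?thesis unfolding prox_def prox_obj_def by (rule someI_ex[THEN spec])
qed

(* The prox objective is (1 / alpha - rho)-strongly convex; comparing its minimiser with the points
   on the segment towards w and letting them approach the minimiser gives the growth term. *)
lemma prox_quadratic_growth:
  "prox_obj y (prox \<alpha> h y) + (1 / \<alpha> - \<rho>) / 2 * (norm (w - prox \<alpha> h y))\<^sup>2 \<le> prox_obj y w"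
proof -
  define p where "p = prox \<alpha> h y"
  define g where "g x = h x + \<rho> / 2 * (norm x)\<^sup>2" for x
  define q where "q = (1 / \<alpha> - \<rho>) / 2 * (norm (w - p))\<^sup>2"
  have "1 / \<alpha> - \<rho> > 0" using alpha_rho alpha_pos by (simp add: field_simps)
  then have q: "q \<ge> 0" by (simp add: q_def)
  have obj: "prox_obj y v = g v - \<rho> / 2 * (norm v)\<^sup>2 + (norm (v - y))\<^sup>2 / (2 * \<alpha>)" for v
    by (simp add: prox_obj_def g_def)
  have "prox_obj y p + q - prox_obj y w \<le> t * q" if t: "0 < t" "t < 1" for t
  proof -
    define x where "x = (1 - t) *\<^sub>R p + t *\<^sub>R w"
    have "g x \<le> (1 - t) * g p + t * g w"
      unfolding x_def g_def using weakly_convex t by (intro convex_onD) auto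
    moreover have nx: "(norm x)\<^sup>2 = (1 - t) * (norm p)\<^sup>2 + t * (norm w)\<^sup>2 - t * (1 - t) * (norm (w - p))\<^sup>2"
      using norm_sq_convex_comb[of t p w 0] by (simp add: x_def)
    moreover have nxy: "(norm (x - y))\<^sup>2
        = (1 - t) * (norm (p - y))\<^sup>2 + t * (norm (w - y))\<^sup>2 - t * (1 - t) * (norm (w - p))\<^sup>2"
      unfolding x_def by (rule norm_sq_convex_comb)
    ultimately have "prox_obj y x \<le> (1 - t) * g p + t * g w
        - \<rho> / 2 * ((1 - t) * (norm p)\<^sup>2 + t * (norm w)\<^sup>2 - t * (1 - t) * (norm (w - p))\<^sup>2)
        + ((1 - t) * (norm (p - y))\<^sup>2 + t * (norm (w - y))\<^sup>2 - t * (1 - t) * (norm (w - p))\<^sup>2) / (2 * \<alpha>)"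
      unfolding obj nx nxy by linarith
    also have "\<dots> = (1 - t) * prox_obj y p + t * prox_obj y w - t * (1 - t) * q"
      unfolding obj q_def using alpha_pos by (simp add: field_simps)
    finally have "prox_obj y x \<le> (1 - t) * prox_obj y p + t * prox_obj y w - t * (1 - t) * q" .
    with prox_minimal[of y x, folded p_def] have "t * (prox_obj y p - prox_obj y w + (1 - t) * q) \<le> 0"
      by (simp add: algebra_simps)
    then have "prox_obj y p - prox_obj y w + (1 - t) * q \<le> 0"
      using t by (simp add: mult_le_0_iff)
    then show ?thesis by (simp add: algebra_simps)
  qed
  then have "prox_obj y p + q - prox_obj y w \<le> 0"
    using q by (rule nonpos_if_le_small_multiples)
  then show ?thesis by (simp add: p_def q_def)
qed

lemma prox_lipschitz: "norm (prox \<alpha> h y1 - prox \<alpha> h y2) \<le> norm (y1 - y2) / (1 - \<alpha> * \<rho>)"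
proof -
  define p1 where "p1 = prox \<alpha> h y1"
  define p2 where "p2 = prox \<alpha> h y2"
  define \<mu> where "\<mu> = 1 / \<alpha> - \<rho>"
  have "prox_obj y1 p1 + \<mu> / 2 * (norm (p1 - p2))\<^sup>2 \<le> prox_obj y1 p2"
       "prox_obj y2 p2 + \<mu> / 2 * (norm (p1 - p2))\<^sup>2 \<le> prox_obj y2 p1"
    using prox_quadratic_growth[of y1 p2] prox_quadratic_growth[of y2 p1]
    by (simp_all add: p1_def p2_def \<mu>_def norm_minus_commute)
  then have "\<mu> * (norm (p1 - p2))\<^sup>2
      \<le> ((norm (p2 - y1))\<^sup>2 + (norm (p1 - y2))\<^sup>2 - (norm (p1 - y1))\<^sup>2 - (norm (p2 - y2))\<^sup>2) / (2 * \<alpha>)"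
    unfolding prox_obj_def by (simp add: add_divide_distrib diff_divide_distrib)
  also have "(norm (p2 - y1))\<^sup>2 + (norm (p1 - y2))\<^sup>2 - (norm (p1 - y1))\<^sup>2 - (norm (p2 - y2))\<^sup>2
      = 2 * ((p1 - p2) \<bullet> (y1 - y2))"
    unfolding power2_norm_eq_inner by (simp add: inner_simps algebra_simps inner_commute)
  also have "2 * ((p1 - p2) \<bullet> (y1 - y2)) / (2 * \<alpha>) \<le> norm (p1 - p2) * norm (y1 - y2) / \<alpha>"
    using alpha_pos Cauchy_Schwarz_ineq2[of "p1 - p2" "y1 - y2"] by (simp add: divide_right_mono)
  finally have "\<alpha> * (\<mu> * (norm (p1 - p2))\<^sup>2) \<le> norm (p1 - p2) * norm (y1 - y2)"
    using alpha_pos by (simp add: field_simps)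
  moreover have "\<alpha> * (\<mu> * (norm (p1 - p2))\<^sup>2) = norm (p1 - p2) * ((1 - \<alpha> * \<rho>) * norm (p1 - p2))"
    using alpha_pos by (simp add: \<mu>_def field_simps power2_eq_square)
  ultimately have "norm (p1 - p2) * ((1 - \<alpha> * \<rho>) * norm (p1 - p2)) \<le> norm (p1 - p2) * norm (y1 - y2)"
    by simp
  then have "(1 - \<alpha> * \<rho>) * norm (p1 - p2) \<le> norm (y1 - y2)"
    by (cases "norm (p1 - p2) = 0") (use alpha_rho in auto)
  then show ?thesis using alpha_rho by (simp add: p1_def p2_def field_simps)
qed

lemma continuous_on_prox: "continuous_on UNIV (prox \<alpha> h)"
proof (rule lipschitz_on_continuous_on)
  show "(1 / (1 - \<alpha> * \<rho>))-lipschitz_on UNIV (prox \<alpha> h)"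
    using prox_lipschitz alpha_rho by (intro lipschitz_onI) (auto simp: dist_norm)
qed

lemma prox_residual_in_subdiff: "(1 / \<alpha>) *\<^sub>R (y - prox \<alpha> h y) \<in> frechet_subdiff h (prox \<alpha> h y)"
proof -
  define p where "p = prox \<alpha> h y"
  define v where "v = (1 / \<alpha>) *\<^sub>R (y - p)"
  have quad: "h p + v \<bullet> (w - p) - (norm (w - p))\<^sup>2 / (2 * \<alpha>) \<le> h w" for w
  proof -
    have "(norm ((w - p) + (p - y)))\<^sup>2 = (norm (w - p))\<^sup>2 + 2 * ((w - p) \<bullet> (p - y)) + (norm (p - y))\<^sup>2"
      by (simp only: power2_norm_eq_inner inner_add_left inner_add_right inner_commute[of "p - y" "w - p"])
    then have "(norm (w - y))\<^sup>2 = (norm (w - p))\<^sup>2 + 2 * ((w - p) \<bullet> (p - y)) + (norm (p - y))\<^sup>2"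
      by simp
    then have "(norm (w - y))\<^sup>2 / (2 * \<alpha>)
        = (norm (w - p))\<^sup>2 / (2 * \<alpha>) + ((w - p) \<bullet> (p - y)) / \<alpha> + (norm (p - y))\<^sup>2 / (2 * \<alpha>)"
      using alpha_pos by (simp add: field_simps)
    moreover have "(y - p) \<bullet> (w - p) = - ((w - p) \<bullet> (p - y))"
      by (metis inner_commute inner_minus_right minus_diff_eq)
    then have "v \<bullet> (w - p) = - (((w - p) \<bullet> (p - y)) / \<alpha>)"
      by (simp add: v_def)
    ultimately show ?thesis
      using prox_minimal[of y w] unfolding prox_obj_def p_def[symmetric] by linarith
  qed
  have "\<forall>\<^sub>F w in at p. h p + v \<bullet> (w - p) - e * norm (w - p) \<le> h w" if e: "e > 0" for e
    unfolding eventually_at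
  proof (intro exI[of _ "2 * \<alpha> * e"] conjI ballI impI)
    show "0 < 2 * \<alpha> * e" using alpha_pos e by simp
    fix w assume "w \<noteq> p \<and> dist w p < 2 * \<alpha> * e"
    then have "(norm (w - p))\<^sup>2 \<le> (2 * \<alpha> * e) * norm (w - p)"
      unfolding power2_eq_square by (intro mult_right_mono) (auto simp: dist_norm)
    then have "(norm (w - p))\<^sup>2 / (2 * \<alpha>) \<le> e * norm (w - p)"
      using alpha_pos by (simp add: field_simps)
    then show "h p + v \<bullet> (w - p) - e * norm (w - p) \<le> h w" using quad[of w] by linarith
  qed
  then show ?thesis by (simp add: frechet_subdiff_def p_def v_def)
qed

lemma Gmap_lipschitz: "norm (Gmap \<alpha> h z u - Gmap \<alpha> h z v) \<le> norm (u - v) / (1 - \<alpha> * \<rho>)"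
proof -
  have "Gmap \<alpha> h z u - Gmap \<alpha> h z v = (1 / \<alpha>) *\<^sub>R (prox \<alpha> h (z - \<alpha> *\<^sub>R v) - prox \<alpha> h (z - \<alpha> *\<^sub>R u))"
    unfolding Gmap_def by (simp add: algebra_simps)
  then have "norm (Gmap \<alpha> h z u - Gmap \<alpha> h z v) = norm (prox \<alpha> h (z - \<alpha> *\<^sub>R v) - prox \<alpha> h (z - \<alpha> *\<^sub>R u)) / \<alpha>"
    using alpha_pos by simp
  also have "\<dots> \<le> (norm ((z - \<alpha> *\<^sub>R v) - (z - \<alpha> *\<^sub>R u)) / (1 - \<alpha> * \<rho>)) / \<alpha>"
    using alpha_pos by (intro divide_right_mono prox_lipschitz) auto
  also have "(z - \<alpha> *\<^sub>R v) - (z - \<alpha> *\<^sub>R u) = \<alpha> *\<^sub>R (u - v)" by (simp add: algebra_simps)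
  finally show ?thesis using alpha_pos by simp
qed

lemma Gmap_minus_in_subdiff: "Gmap \<alpha> h z u - u \<in> frechet_subdiff h (prox \<alpha> h (z - \<alpha> *\<^sub>R u))"
proof -
  have "Gmap \<alpha> h z u - u = (1 / \<alpha>) *\<^sub>R ((z - \<alpha> *\<^sub>R u) - prox \<alpha> h (z - \<alpha> *\<^sub>R u))"
    unfolding Gmap_def using alpha_pos by (simp add: algebra_simps)
  then show ?thesis using prox_residual_in_subdiff by metis
qed


lemma prox_step_basic_descent:
  fixes f :: "'a \<Rightarrow> real" and z gf D :: 'a
  assumes f_upper: "\<And>x. f x \<le> f z + gf \<bullet> (x - z) + L / 2 * (norm (x - z))\<^sup>2"
  defines "p \<equiv> prox \<alpha> h (z - \<alpha> *\<^sub>R D)" and "G \<equiv> Gmap \<alpha> h z D"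
  shows "f p + h p - (f z + h z) \<le> \<alpha> * ((D - gf) \<bullet> G) - (\<alpha> - (\<rho> + L) * \<alpha>\<^sup>2 / 2) * (norm G)\<^sup>2"
proof -
  define y where "y = z - \<alpha> *\<^sub>R D"
  have zp: "z - p = \<alpha> *\<^sub>R G" unfolding G_def Gmap_def p_def using alpha_pos by simp
  have "(norm (p - y))\<^sup>2 = \<alpha>\<^sup>2 * (norm (D - G))\<^sup>2"
  proof -
    have "p - y = \<alpha> *\<^sub>R (D - G)" using zp unfolding y_def by (simp add: algebra_simps)
    then show ?thesis by (simp add: power_mult_distrib)
  qed
  also have "(norm (D - G))\<^sup>2 = (norm D)\<^sup>2 - 2 * (D \<bullet> G) + (norm G)\<^sup>2"
    by (simp add: power2_norm_eq_inner inner_simps inner_commute)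
  finally have py: "(norm (p - y))\<^sup>2 = \<alpha>\<^sup>2 * ((norm D)\<^sup>2 - 2 * (D \<bullet> G) + (norm G)\<^sup>2)" .
  have zy: "(norm (z - y))\<^sup>2 = \<alpha>\<^sup>2 * (norm D)\<^sup>2" by (simp add: y_def power_mult_distrib)
  have zp2: "(norm (z - p))\<^sup>2 = \<alpha>\<^sup>2 * (norm G)\<^sup>2" by (simp add: zp power_mult_distrib)
  have "h p + (norm (p - y))\<^sup>2 / (2 * \<alpha>) + (1 / \<alpha> - \<rho>) / 2 * (norm (z - p))\<^sup>2
      \<le> h z + (norm (z - y))\<^sup>2 / (2 * \<alpha>)"
    using prox_quadratic_growth[of y z] unfolding prox_obj_def p_def y_def .
  then have "h p - h z
      \<le> (norm (z - y))\<^sup>2 / (2 * \<alpha>) - (norm (p - y))\<^sup>2 / (2 * \<alpha>) - (1 / \<alpha> - \<rho>) / 2 * (norm (z - p))\<^sup>2"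
    by linarith
  also have "\<dots> = \<alpha> * (D \<bullet> G) - (\<alpha> - \<rho> * \<alpha>\<^sup>2 / 2) * (norm G)\<^sup>2"
    unfolding py zy zp2 using alpha_pos by (simp add: field_simps power2_eq_square)
  finally have "h p - h z \<le> \<alpha> * (D \<bullet> G) - (\<alpha> - \<rho> * \<alpha>\<^sup>2 / 2) * (norm G)\<^sup>2" .
  moreover have "f p \<le> f z - \<alpha> * (gf \<bullet> G) + L / 2 * (\<alpha>\<^sup>2 * (norm G)\<^sup>2)"
    using f_upper[of p] zp2 zp by (simp add: norm_minus_commute algebra_simps)
  ultimately have "f p + h p - (f z + h z)
      \<le> \<alpha> * (D \<bullet> G) - \<alpha> * (gf \<bullet> G) - (\<alpha> - \<rho> * \<alpha>\<^sup>2 / 2) * (norm G)\<^sup>2 + L / 2 * (\<alpha>\<^sup>2 * (norm G)\<^sup>2)"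
    by linarith
  then show ?thesis by (simp add: inner_diff_left field_simps)
qed

lemma prox_step_descent:
  fixes f :: "'a \<Rightarrow> real" and z gf D :: 'a
  assumes f_upper: "\<And>x. f x \<le> f z + gf \<bullet> (x - z) + L / 2 * (norm (x - z))\<^sup>2"
    and subgrad_bound: "\<forall>x. \<forall>v\<in>frechet_subdiff h x. (norm v)\<^sup>2 \<le> Bh"
  defines "p \<equiv> prox \<alpha> h (z - \<alpha> *\<^sub>R D)" and "\<delta> \<equiv> 1 / (1 - \<alpha> * \<rho>)\<^sup>2"
  shows "f p + h p - (f z + h z)
    \<le> - (\<alpha> - 2 * (\<rho> + L) * \<alpha>\<^sup>2) / 4 * (norm (Gmap \<alpha> h z D))\<^sup>2
       - \<alpha> / 8 * (norm (Gmap \<alpha> h z gf))\<^sup>2 - \<alpha> / 16 * (norm gf)\<^sup>2 + \<alpha> * Bh / 8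
       + \<alpha> * (2 + \<delta>) / 2 * (norm (D - gf))\<^sup>2"
proof -
  define G where "G = Gmap \<alpha> h z D"
  define G0 where "G0 = Gmap \<alpha> h z gf"
  define e where "e = D - gf"
  have "norm (G - G0) \<le> norm e / (1 - \<alpha> * \<rho>)"
    unfolding G_def G0_def e_def by (rule Gmap_lipschitz)
  then have "(norm (G - G0))\<^sup>2 \<le> (norm e / (1 - \<alpha> * \<rho>))\<^sup>2"
    by (intro power_mono) auto
  then have "(norm (G - G0))\<^sup>2 \<le> \<delta> * (norm e)\<^sup>2"
    by (simp add: \<delta>_def power_divide)
  then have G0: "(norm G0)\<^sup>2 \<le> 2 * (norm G)\<^sup>2 + 2 * (\<delta> * (norm e)\<^sup>2)"
    using norm_add_sq_le[of G "G0 - G"] by (simp add: norm_minus_commute)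
  have "(norm (G0 - gf))\<^sup>2 \<le> Bh"
    using subgrad_bound Gmap_minus_in_subdiff[of z gf] by (simp add: G0_def)
  then have gf: "(norm gf)\<^sup>2 \<le> 2 * (norm G0)\<^sup>2 + 2 * Bh"
    using norm_add_sq_le[of G0 "gf - G0"] by (simp add: norm_minus_commute)
  have "f p + h p - (f z + h z) \<le> \<alpha> * (e \<bullet> G) - (\<alpha> - (\<rho> + L) * \<alpha>\<^sup>2 / 2) * (norm G)\<^sup>2"
    using prox_step_basic_descent[OF f_upper] by (simp add: p_def G_def e_def)
  also have "\<dots> \<le> - \<alpha> * (norm G)\<^sup>2 / 4 + (\<rho> + L) * \<alpha>\<^sup>2 * (norm G)\<^sup>2 / 2 - \<alpha> * (norm G0)\<^sup>2 / 8
      - \<alpha> * (norm gf)\<^sup>2 / 16 + \<alpha> * Bh / 8 + \<alpha> * (norm e)\<^sup>2 + \<alpha> * \<delta> * (norm e)\<^sup>2 / 2"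
    using mult_left_mono[OF inner_le_norm_sq_add_quarter[of e G], of \<alpha>] mult_left_mono[OF G0, of "\<alpha> / 4"]
      mult_left_mono[OF gf, of "\<alpha> / 16"] alpha_pos
    by (simp add: algebra_simps)
  also have "\<dots> = - (\<alpha> - 2 * (\<rho> + L) * \<alpha>\<^sup>2) / 4 * (norm G)\<^sup>2
       - \<alpha> / 8 * (norm G0)\<^sup>2 - \<alpha> / 16 * (norm gf)\<^sup>2 + \<alpha> * Bh / 8 + \<alpha> * (2 + \<delta>) / 2 * (norm e)\<^sup>2"
    by (simp add: field_simps)
  finally show ?thesis by (simp add: G_def G0_def e_def)
qed

end

section \<open>Square-integrable random vectors\<close>

definition square_integrable :: "'a measure \<Rightarrow> ('a \<Rightarrow> 'b::real_normed_vector) \<Rightarrow> bool" where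
  "square_integrable M f \<longleftrightarrow> f \<in> borel_measurable M \<and> integrable M (\<lambda>\<omega>. (norm (f \<omega>))\<^sup>2)"

lemma square_integrableD:
  assumes "square_integrable M f"
  shows "f \<in> borel_measurable M" and "integrable M (\<lambda>\<omega>. (norm (f \<omega>))\<^sup>2)"
  using assms by (simp_all add: square_integrable_def)

context
  fixes M :: "'a measure"
begin

lemma square_integrable_zero: "square_integrable M (\<lambda>\<omega>. 0 :: 'b::real_normed_vector)"
  by (simp add: square_integrable_def)

lemma square_integrable_add:
  fixes f g :: "'a \<Rightarrow> 'b::{real_normed_vector, second_countable_topology}"
  assumes f: "square_integrable M f" and g: "square_integrable M g"
  shows "square_integrable M (\<lambda>\<omega>. f \<omega> + g \<omega>)"
  unfolding square_integrable_def
proof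
  show m: "(\<lambda>\<omega>. f \<omega> + g \<omega>) \<in> borel_measurable M"
    using f g by (intro borel_measurable_add) (simp_all add: square_integrable_def)
  show "integrable M (\<lambda>\<omega>. (norm (f \<omega> + g \<omega>))\<^sup>2)"
  proof (rule Bochner_Integration.integrable_bound)
    show "integrable M (\<lambda>\<omega>. 2 * (norm (f \<omega>))\<^sup>2 + 2 * (norm (g \<omega>))\<^sup>2)"
      using f g by (auto simp: square_integrable_def)
    show "AE \<omega> in M. norm ((norm (f \<omega> + g \<omega>))\<^sup>2) \<le> norm (2 * (norm (f \<omega>))\<^sup>2 + 2 * (norm (g \<omega>))\<^sup>2)"
      using norm_add_sq_le by (intro AE_I2) simp
  qed (use m in measurable)
qed

lemma square_integrable_scaleR:
  fixes f :: "'a \<Rightarrow> 'b::{real_normed_vector, second_countable_topology}"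
  shows "square_integrable M f \<Longrightarrow> square_integrable M (\<lambda>\<omega>. c *\<^sub>R f \<omega>)"
  unfolding square_integrable_def by (auto intro: borel_measurable_scaleR simp: power_mult_distrib)

lemma square_integrable_diff:
  fixes f g :: "'a \<Rightarrow> 'b::{real_normed_vector, second_countable_topology}"
  assumes "square_integrable M f" and "square_integrable M g"
  shows "square_integrable M (\<lambda>\<omega>. f \<omega> - g \<omega>)"
  using square_integrable_add[OF assms(1) square_integrable_scaleR[OF assms(2), of "-1"]] by simp

lemma square_integrable_sum:
  fixes f :: "'i \<Rightarrow> 'a \<Rightarrow> 'b::{real_normed_vector, second_countable_topology}"
  shows "(\<And>j. j \<in> S \<Longrightarrow> square_integrable M (f j)) \<Longrightarrow> square_integrable M (\<lambda>\<omega>. \<Sum>j\<in>S. f j \<omega>)"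
proof (induction S rule: infinite_finite_induct)
  case (insert j S)
  then show ?case using square_integrable_add[of "f j" "\<lambda>\<omega>. \<Sum>j\<in>S. f j \<omega>"] by simp
qed (simp_all add: square_integrable_zero)

lemma integrable_inner_square_integrable:
  fixes f g :: "'a \<Rightarrow> 'b::{real_inner, second_countable_topology}"
  assumes "square_integrable M f" and "square_integrable M g"
  shows "integrable M (\<lambda>\<omega>. f \<omega> \<bullet> g \<omega>)"
proof (rule Bochner_Integration.integrable_bound)
  show "integrable M (\<lambda>\<omega>. (norm (f \<omega>))\<^sup>2 + (norm (g \<omega>))\<^sup>2)"
    using assms by (auto simp: square_integrable_def)
  show "(\<lambda>\<omega>. f \<omega> \<bullet> g \<omega>) \<in> borel_measurable M"
    using assms by (intro borel_measurable_inner) (simp_all add: square_integrable_def)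
  show "AE \<omega> in M. norm (f \<omega> \<bullet> g \<omega>) \<le> norm ((norm (f \<omega>))\<^sup>2 + (norm (g \<omega>))\<^sup>2)"
    using abs_inner_le_norm_sq_add by (intro AE_I2) simp
qed

lemma integral_norm_sum_sq_orthogonal:
  fixes Z :: "'i \<Rightarrow> 'a \<Rightarrow> 'b::{real_inner, second_countable_topology}"
  assumes P: "finite P" and Z: "\<And>p. p \<in> P \<Longrightarrow> square_integrable M (Z p)"
    and orth: "\<And>p q. p \<in> P \<Longrightarrow> q \<in> P \<Longrightarrow> p \<noteq> q \<Longrightarrow> (\<integral>\<omega>. Z p \<omega> \<bullet> Z q \<omega> \<partial>M) = 0"
    and var: "\<And>p. p \<in> P \<Longrightarrow> (\<integral>\<omega>. (norm (Z p \<omega>))\<^sup>2 \<partial>M) \<le> \<sigma>2"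
  shows "(\<integral>\<omega>. (norm (\<Sum>p\<in>P. Z p \<omega>))\<^sup>2 \<partial>M) \<le> real (card P) * \<sigma>2"
proof -
  have int: "integrable M (\<lambda>\<omega>. Z p \<omega> \<bullet> Z q \<omega>)" if "p \<in> P" "q \<in> P" for p q
    using that Z by (intro integrable_inner_square_integrable)
  have "(\<integral>\<omega>. (norm (\<Sum>p\<in>P. Z p \<omega>))\<^sup>2 \<partial>M) = (\<integral>\<omega>. (\<Sum>p\<in>P. \<Sum>q\<in>P. Z p \<omega> \<bullet> Z q \<omega>) \<partial>M)"
    by (simp only: power2_norm_eq_inner inner_sum_left) (simp only: inner_sum_right)
  also have "\<dots> = (\<Sum>p\<in>P. \<Sum>q\<in>P. \<integral>\<omega>. Z p \<omega> \<bullet> Z q \<omega> \<partial>M)"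
    using int by (simp add: Bochner_Integration.integral_sum Bochner_Integration.integrable_sum)
  also have "\<dots> = (\<Sum>p\<in>P. \<integral>\<omega>. (norm (Z p \<omega>))\<^sup>2 \<partial>M)"
  proof (rule sum.cong[OF refl])
    fix p assume "p \<in> P"
    then have "(\<Sum>q\<in>P. \<integral>\<omega>. Z p \<omega> \<bullet> Z q \<omega> \<partial>M) = (\<Sum>q\<in>{p}. \<integral>\<omega>. Z p \<omega> \<bullet> Z q \<omega> \<partial>M)"
      using P orth by (intro sum.mono_neutral_right) auto
    then show "(\<Sum>q\<in>P. \<integral>\<omega>. Z p \<omega> \<bullet> Z q \<omega> \<partial>M) = (\<integral>\<omega>. (norm (Z p \<omega>))\<^sup>2 \<partial>M)"
      by (simp add: power2_norm_eq_inner)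
  qed
  also have "\<dots> \<le> (\<Sum>p\<in>P. \<sigma>2)" using var by (rule sum_mono)
  finally show ?thesis by simp
qed

end

context finite_measure
begin

lemma square_integrable_const: "square_integrable M (\<lambda>\<omega>. c :: 'b::real_normed_vector)"
  by (simp add: square_integrable_def)

lemma square_integrable_compose:
  fixes f :: "'a \<Rightarrow> 'b::{real_normed_vector, second_countable_topology}"
    and F :: "'b \<Rightarrow> 'c::{real_normed_vector, second_countable_topology}"
  assumes f: "square_integrable M f" and F: "continuous_on UNIV F"
    and growth: "\<And>x. norm (F x) \<le> A + C * norm x" and C: "C \<ge> 0"
  shows "square_integrable M (\<lambda>\<omega>. F (f \<omega>))"
  unfolding square_integrable_def
proof
  show m: "(\<lambda>\<omega>. F (f \<omega>)) \<in> borel_measurable M"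
    using borel_measurable_continuous_on[OF F square_integrableD(1)[OF f]] .
  have "norm (F 0) \<le> A" using growth[of 0] by simp
  then have A: "A \<ge> 0" using norm_ge_zero order_trans by blast
  show "integrable M (\<lambda>\<omega>. (norm (F (f \<omega>)))\<^sup>2)"
  proof (rule Bochner_Integration.integrable_bound)
    show "integrable M (\<lambda>\<omega>. 2 * A\<^sup>2 + 2 * C\<^sup>2 * (norm (f \<omega>))\<^sup>2)"
      using square_integrableD(2)[OF f] by auto
    show "AE \<omega> in M. norm ((norm (F (f \<omega>)))\<^sup>2) \<le> norm (2 * A\<^sup>2 + 2 * C\<^sup>2 * (norm (f \<omega>))\<^sup>2)"
    proof (intro AE_I2)
      fix \<omega>
      have "(norm (F (f \<omega>)))\<^sup>2 \<le> (A + C * norm (f \<omega>))\<^sup>2" using growth by (intro power_mono) auto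
      also have "\<dots> \<le> 2 * A\<^sup>2 + 2 * C\<^sup>2 * (norm (f \<omega>))\<^sup>2"
        using norm_add_sq_le[of A "C * norm (f \<omega>)"] A C by (simp add: power_mult_distrib)
      finally show "norm ((norm (F (f \<omega>)))\<^sup>2) \<le> norm (2 * A\<^sup>2 + 2 * C\<^sup>2 * (norm (f \<omega>))\<^sup>2)"
        by simp
    qed
  qed (use m in measurable)
qed

lemma square_integrable_lipschitz_compose:
  fixes f :: "'a \<Rightarrow> 'b::{real_normed_vector, second_countable_topology}"
    and F :: "'b \<Rightarrow> 'c::{real_normed_vector, second_countable_topology}"
  assumes f: "square_integrable M f" and F: "C-lipschitz_on UNIV F"
  shows "square_integrable M (\<lambda>\<omega>. F (f \<omega>))"
proof (rule square_integrable_compose[OF f lipschitz_on_continuous_on[OF F]])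
  show "norm (F x) \<le> norm (F 0) + C * norm x" for x
    using lipschitz_onD[OF F, of x 0] norm_triangle_ineq2[of "F x" "F 0"] by (simp add: dist_norm)
  show "C \<ge> 0" using F by (rule lipschitz_on_nonneg)
qed

end

section \<open>Functions of independent samples\<close>

context prob_space
begin

lemma nn_integral_indep_var:
  assumes indep: "indep_var S Y T Z" and f: "f \<in> borel_measurable (S \<Otimes>\<^sub>M T)"
  shows "(\<integral>\<^sup>+\<omega>. f (Y \<omega>, Z \<omega>) \<partial>M) = (\<integral>\<^sup>+y. \<integral>\<^sup>+z. f (y, z) \<partial>distr M T Z \<partial>distr M S Y)"
proof -
  have Y: "random_variable S Y" and Z: "random_variable T Z"
    and prod: "distr M S Y \<Otimes>\<^sub>M distr M T Z = distr M (S \<Otimes>\<^sub>M T) (\<lambda>\<omega>. (Y \<omega>, Z \<omega>))"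
    using indep unfolding indep_var_distribution_eq by auto
  interpret PZ: prob_space "distr M T Z" using Z by (rule prob_space_distr)
  have "f \<in> borel_measurable (distr M S Y \<Otimes>\<^sub>M distr M T Z)"
    using f by (simp cong: measurable_cong_sets)
  then have "(\<integral>\<^sup>+y. \<integral>\<^sup>+z. f (y, z) \<partial>distr M T Z \<partial>distr M S Y) = (\<integral>\<^sup>+p. f p \<partial>(distr M S Y \<Otimes>\<^sub>M distr M T Z))"
    by (rule PZ.nn_integral_fst)
  also have "\<dots> = (\<integral>\<^sup>+\<omega>. f (Y \<omega>, Z \<omega>) \<partial>M)"
    using f Y Z unfolding prod by (simp add: nn_integral_distr measurable_Pair)
  finally show ?thesis ..
qed

lemma integral_indep_var:
  fixes f :: "_ \<Rightarrow> 'b::{banach, second_countable_topology}"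
  assumes indep: "indep_var S Y T Z" and f: "f \<in> borel_measurable (S \<Otimes>\<^sub>M T)"
    and int: "integrable M (\<lambda>\<omega>. f (Y \<omega>, Z \<omega>))"
  shows "(\<integral>\<omega>. f (Y \<omega>, Z \<omega>) \<partial>M) = (\<integral>y. \<integral>z. f (y, z) \<partial>distr M T Z \<partial>distr M S Y)"
proof -
  have Y: "random_variable S Y" and Z: "random_variable T Z"
    and prod: "distr M S Y \<Otimes>\<^sub>M distr M T Z = distr M (S \<Otimes>\<^sub>M T) (\<lambda>\<omega>. (Y \<omega>, Z \<omega>))"
    using indep unfolding indep_var_distribution_eq by auto
  interpret PY: prob_space "distr M S Y" using Y by (rule prob_space_distr)
  interpret PZ: prob_space "distr M T Z" using Z by (rule prob_space_distr)
  interpret PYZ: pair_sigma_finite "distr M S Y" "distr M T Z" ..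
  have YZ: "(\<lambda>\<omega>. (Y \<omega>, Z \<omega>)) \<in> measurable M (S \<Otimes>\<^sub>M T)" using Y Z by (rule measurable_Pair)
  have "integrable (distr M S Y \<Otimes>\<^sub>M distr M T Z) f"
    unfolding prod using integrable_distr_eq[OF YZ f] int by simp
  then have "(\<integral>y. \<integral>z. f (y, z) \<partial>distr M T Z \<partial>distr M S Y) = integral\<^sup>L (distr M S Y \<Otimes>\<^sub>M distr M T Z) f"
    by (rule PYZ.integral_fst')
  also have "\<dots> = (\<integral>\<omega>. f (Y \<omega>, Z \<omega>) \<partial>M)"
    unfolding prod using integral_distr[OF YZ f] by simp
  finally show ?thesis ..
qed

(* indep_var requires both variables to have the same type, so the single sample X a is
   reached through the restriction of the family to {a}. *)
lemma distr_component_restrict_singleton: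
  assumes "X a \<in> measurable M (M' a)"
  shows "distr (distr M (PiM {a} M') (\<lambda>\<omega>. restrict (\<lambda>j. X j \<omega>) {a})) (M' a) (\<lambda>v. v a)
    = distr M (M' a) (X a)"
proof -
  have "(\<lambda>\<omega>. restrict (\<lambda>j. X j \<omega>) {a}) \<in> measurable M (PiM {a} M')"
    using assms by (intro measurable_restrict) auto
  then show ?thesis
    by (subst distr_distr) (auto intro: measurable_component_singleton simp: comp_def)
qed

lemma indep_vars_component_nn_integral:
  assumes indep: "indep_vars M' X I" and J: "J \<subseteq> I" "a \<in> I" "a \<notin> J"
    and f: "f \<in> borel_measurable (PiM J M' \<Otimes>\<^sub>M M' a)"
  shows "(\<integral>\<^sup>+\<omega>. f (restrict (\<lambda>j. X j \<omega>) J, X a \<omega>) \<partial>M)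
    = (\<integral>\<^sup>+u. \<integral>\<^sup>+w. f (u, w) \<partial>distr M (M' a) (X a) \<partial>distr M (PiM J M') (\<lambda>\<omega>. restrict (\<lambda>j. X j \<omega>) J))"
proof -
  let ?R = "\<lambda>A \<omega>. restrict (\<lambda>j. X j \<omega>) A"
  have ind: "indep_var (PiM J M') (?R J) (PiM {a} M') (?R {a})"
    using J by (intro indep_var_restrict[OF indep]) auto
  have proj: "(\<lambda>v. v a) \<in> measurable (PiM {a} M') (M' a)"
    by (rule measurable_component_singleton) simp
  have f': "(\<lambda>p. f (fst p, snd p a)) \<in> borel_measurable (PiM J M' \<Otimes>\<^sub>M PiM {a} M')"
    using measurable_compose[OF measurable_Pair[OF measurable_fst measurable_compose[OF measurable_snd proj]] f] .
  have Xa: "X a \<in> measurable M (M' a)"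
    using indep J(2) unfolding indep_vars_def by auto
  have "(\<integral>\<^sup>+\<omega>. f (?R J \<omega>, X a \<omega>) \<partial>M)
      = (\<integral>\<^sup>+u. \<integral>\<^sup>+v. f (u, v a) \<partial>distr M (PiM {a} M') (?R {a}) \<partial>distr M (PiM J M') (?R J))"
    using nn_integral_indep_var[OF ind f'] by simp
  also have "\<dots> = (\<integral>\<^sup>+u. \<integral>\<^sup>+w. f (u, w) \<partial>distr M (M' a) (X a) \<partial>distr M (PiM J M') (?R J))"
  proof (rule nn_integral_cong)
    fix u assume "u \<in> space (distr M (PiM J M') (?R J))"
    then have "(\<lambda>w. f (u, w)) \<in> borel_measurable (M' a)"
      using f by (intro measurable_Pair2[OF f]) simp
    then show "(\<integral>\<^sup>+v. f (u, v a) \<partial>distr M (PiM {a} M') (?R {a})) = (\<integral>\<^sup>+w. f (u, w) \<partial>distr M (M' a) (X a))"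
      using proj distr_component_restrict_singleton[where X=X and a=a and M'=M', OF Xa, symmetric]
      by (simp add: nn_integral_distr)
  qed
  finally show ?thesis .
qed

lemma indep_vars_component_integral:
  fixes f :: "_ \<Rightarrow> 'b::{banach, second_countable_topology}"
  assumes indep: "indep_vars M' X I" and J: "J \<subseteq> I" "a \<in> I" "a \<notin> J"
    and f: "f \<in> borel_measurable (PiM J M' \<Otimes>\<^sub>M M' a)"
    and int: "integrable M (\<lambda>\<omega>. f (restrict (\<lambda>j. X j \<omega>) J, X a \<omega>))"
  shows "(\<integral>\<omega>. f (restrict (\<lambda>j. X j \<omega>) J, X a \<omega>) \<partial>M)
    = (\<integral>u. \<integral>w. f (u, w) \<partial>distr M (M' a) (X a) \<partial>distr M (PiM J M') (\<lambda>\<omega>. restrict (\<lambda>j. X j \<omega>) J))"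
proof -
  let ?R = "\<lambda>A \<omega>. restrict (\<lambda>j. X j \<omega>) A"
  have ind: "indep_var (PiM J M') (?R J) (PiM {a} M') (?R {a})"
    using J by (intro indep_var_restrict[OF indep]) auto
  have proj: "(\<lambda>v. v a) \<in> measurable (PiM {a} M') (M' a)"
    by (rule measurable_component_singleton) simp
  have f': "(\<lambda>p. f (fst p, snd p a)) \<in> borel_measurable (PiM J M' \<Otimes>\<^sub>M PiM {a} M')"
    using measurable_compose[OF measurable_Pair[OF measurable_fst measurable_compose[OF measurable_snd proj]] f] .
  have Xa: "X a \<in> measurable M (M' a)"
    using indep J(2) unfolding indep_vars_def by auto
  have "(\<integral>\<omega>. f (?R J \<omega>, X a \<omega>) \<partial>M)
      = (\<integral>u. \<integral>v. f (u, v a) \<partial>distr M (PiM {a} M') (?R {a}) \<partial>distr M (PiM J M') (?R J))"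
    using integral_indep_var[OF ind f'] int by simp
  also have "\<dots> = (\<integral>u. \<integral>w. f (u, w) \<partial>distr M (M' a) (X a) \<partial>distr M (PiM J M') (?R J))"
  proof (rule Bochner_Integration.integral_cong[OF refl])
    fix u assume "u \<in> space (distr M (PiM J M') (?R J))"
    then have "(\<lambda>w. f (u, w)) \<in> borel_measurable (M' a)"
      using f by (intro measurable_Pair2[OF f]) simp
    then show "(\<integral>v. f (u, v a) \<partial>distr M (PiM {a} M') (?R {a})) = (\<integral>w. f (u, w) \<partial>distr M (M' a) (X a))"
      using proj distr_component_restrict_singleton[where X=X and a=a and M'=M', OF Xa, symmetric]
      by (simp add: integral_distr)
  qed
  finally show ?thesis .
qed

lemma indep_noise_second_moment:
  fixes q :: "_ \<Rightarrow> 'b::{real_normed_vector, second_countable_topology}"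
  assumes indep: "indep_vars M' X I" and J: "J \<subseteq> I" "a \<in> I" "a \<notin> J"
    and q: "q \<in> borel_measurable (PiM J M' \<Otimes>\<^sub>M M' a)"
    and var: "\<And>u. u \<in> space (PiM J M') \<Longrightarrow> integrable (distr M (M' a) (X a)) (\<lambda>w. (norm (q (u, w)))\<^sup>2)
                \<and> (\<integral>w. (norm (q (u, w)))\<^sup>2 \<partial>distr M (M' a) (X a)) \<le> \<sigma>2"
  shows "square_integrable M (\<lambda>\<omega>. q (restrict (\<lambda>j. X j \<omega>) J, X a \<omega>))"
    and "(\<integral>\<omega>. (norm (q (restrict (\<lambda>j. X j \<omega>) J, X a \<omega>)))\<^sup>2 \<partial>M) \<le> \<sigma>2"
proof -
  let ?R = "\<lambda>\<omega>. restrict (\<lambda>j. X j \<omega>) J"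
  have X: "X j \<in> measurable M (M' j)" if "j \<in> I" for j
    using indep that unfolding indep_vars_def by auto
  have R: "?R \<in> measurable M (PiM J M')" using J X by (intro measurable_restrict) auto
  interpret PR: prob_space "distr M (PiM J M') ?R" using R by (rule prob_space_distr)
  have qm: "(\<lambda>\<omega>. q (?R \<omega>, X a \<omega>)) \<in> borel_measurable M"
    using measurable_compose[OF measurable_Pair[OF R X[OF J(2)]] q] .
  have "(\<integral>\<^sup>+\<omega>. ennreal ((norm (q (?R \<omega>, X a \<omega>)))\<^sup>2) \<partial>M)
      = (\<integral>\<^sup>+u. \<integral>\<^sup>+w. ennreal ((norm (q (u, w)))\<^sup>2) \<partial>distr M (M' a) (X a) \<partial>distr M (PiM J M') ?R)"
    using q by (intro indep_vars_component_nn_integral[OF indep J]) measurable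
  also have "\<dots> \<le> (\<integral>\<^sup>+u. ennreal \<sigma>2 \<partial>distr M (PiM J M') ?R)"
  proof (rule nn_integral_mono)
    fix u assume "u \<in> space (distr M (PiM J M') ?R)"
    then show "(\<integral>\<^sup>+w. ennreal ((norm (q (u, w)))\<^sup>2) \<partial>distr M (M' a) (X a)) \<le> ennreal \<sigma>2"
      using var[of u] by (simp add: nn_integral_eq_integral ennreal_leI)
  qed
  also have "\<dots> = ennreal \<sigma>2" using PR.emeasure_space_1 by simp
  finally have nn: "(\<integral>\<^sup>+\<omega>. ennreal ((norm (q (?R \<omega>, X a \<omega>)))\<^sup>2) \<partial>M) \<le> ennreal \<sigma>2" .
  have int: "integrable M (\<lambda>\<omega>. (norm (q (?R \<omega>, X a \<omega>)))\<^sup>2)"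
    using nn qm by (intro integrableI_nonneg) (auto simp: top.not_eq_extremum intro: le_less_trans)
  then show "square_integrable M (\<lambda>\<omega>. q (?R \<omega>, X a \<omega>))"
    using qm by (simp add: square_integrable_def)
  obtain \<omega> where "\<omega> \<in> space M" using not_empty by blast
  then have "?R \<omega> \<in> space (PiM J M')" by (rule measurable_space[OF R])
  moreover have "0 \<le> (\<integral>w. (norm (q (?R \<omega>, w)))\<^sup>2 \<partial>distr M (M' a) (X a))"
    by (rule integral_nonneg_AE) simp
  ultimately have "0 \<le> \<sigma>2" using var[of "?R \<omega>"] by linarith
  have "ennreal (\<integral>\<omega>. (norm (q (?R \<omega>, X a \<omega>)))\<^sup>2 \<partial>M) \<le> ennreal \<sigma>2"
    using nn int by (simp add: nn_integral_eq_integral)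
  then show "(\<integral>\<omega>. (norm (q (?R \<omega>, X a \<omega>)))\<^sup>2 \<partial>M) \<le> \<sigma>2"
    using \<open>0 \<le> \<sigma>2\<close> by simp
qed

lemma indep_noise_uncorrelated:
  fixes q \<Psi> :: "_ \<Rightarrow> 'b::euclidean_space"
  assumes indep: "indep_vars M' X I" and J: "J \<subseteq> I" "a \<in> I" "a \<notin> J"
    and q: "q \<in> borel_measurable (PiM J M' \<Otimes>\<^sub>M M' a)" and \<Psi>: "\<Psi> \<in> borel_measurable (PiM J M')"
    and mean: "\<And>u. u \<in> space (PiM J M') \<Longrightarrow> integrable (distr M (M' a) (X a)) (\<lambda>w. q (u, w))
                 \<and> (\<integral>w. q (u, w) \<partial>distr M (M' a) (X a)) = 0"
    and sq: "square_integrable M (\<lambda>\<omega>. q (restrict (\<lambda>j. X j \<omega>) J, X a \<omega>))"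
      "square_integrable M (\<lambda>\<omega>. \<Psi> (restrict (\<lambda>j. X j \<omega>) J))"
  shows "(\<integral>\<omega>. q (restrict (\<lambda>j. X j \<omega>) J, X a \<omega>) \<bullet> \<Psi> (restrict (\<lambda>j. X j \<omega>) J) \<partial>M) = 0"
proof -
  let ?R = "\<lambda>\<omega>. restrict (\<lambda>j. X j \<omega>) J"
  have fm: "(\<lambda>p. q p \<bullet> \<Psi> (fst p)) \<in> borel_measurable (PiM J M' \<Otimes>\<^sub>M M' a)"
    using q measurable_compose[OF measurable_fst \<Psi>] by (rule borel_measurable_inner)
  have "(\<integral>\<omega>. q (?R \<omega>, X a \<omega>) \<bullet> \<Psi> (?R \<omega>) \<partial>M)
      = (\<integral>u. \<integral>w. q (u, w) \<bullet> \<Psi> u \<partial>distr M (M' a) (X a) \<partial>distr M (PiM J M') ?R)"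
    using indep_vars_component_integral[OF indep J fm] integrable_inner_square_integrable[OF sq] by simp
  also have "\<dots> = (\<integral>u. 0 \<partial>distr M (PiM J M') ?R)"
    using mean by (intro Bochner_Integration.integral_cong) auto
  finally show ?thesis by simp
qed

end

section \<open>The FedCanon iteration\<close>

lemma sgrad_cong: "(\<And>b. b < B \<Longrightarrow> s b = s' b) \<Longrightarrow> sgrad gF B i x s = sgrad gF B i x s'"
  unfolding sgrad_def by (intro arg_cong[where f="\<lambda>v. _ *\<^sub>R v"] sum.cong) auto

lemma local_pt_cong:
  "(\<And>k' b. k' < k \<Longrightarrow> b < B \<Longrightarrow> s k' b = s' k' b) \<Longrightarrow>
   local_pt gF B \<beta> c i z s k = local_pt gF B \<beta> c i z s' k"
proof (induction k)
  case (Suc k)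
  then have "sgrad gF B i (local_pt gF B \<beta> c i z s k) (s k) = sgrad gF B i (local_pt gF B \<beta> c i z s k) (s' k)"
    by (intro sgrad_cong) auto
  with Suc show ?case by simp
qed simp

lemma fedcanon_cong:
  assumes "\<And>s i k b. s < t \<Longrightarrow> i < N \<Longrightarrow> k < K \<Longrightarrow> b < B \<Longrightarrow> \<xi> s i k b = \<xi>' s i k b"
  shows "fst (fedcanon gF B \<alpha> \<beta> K N h z0 c0 \<xi> t) = fst (fedcanon gF B \<alpha> \<beta> K N h z0 c0 \<xi>' t)
    \<and> (\<forall>i<N. snd (fedcanon gF B \<alpha> \<beta> K N h z0 c0 \<xi> t) i = snd (fedcanon gF B \<alpha> \<beta> K N h z0 c0 \<xi>' t) i)"
  using assms
proof (induction t)
  case (Suc t)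
  define st where "st = fedcanon gF B \<alpha> \<beta> K N h z0 c0 \<xi> t"
  define st' where "st' = fedcanon gF B \<alpha> \<beta> K N h z0 c0 \<xi>' t"
  have IH: "fst st = fst st'" "\<And>i. i < N \<Longrightarrow> snd st i = snd st' i"
    using Suc unfolding st_def st'_def by auto
  have delta: "fc_delta gF B \<beta> K (snd st i) i (fst st) (\<xi> t i) = fc_delta gF B \<beta> K (snd st' i) i (fst st') (\<xi>' t i)"
    if "i < N" for i
    unfolding fc_delta_def IH(1) IH(2)[OF that]
    using Suc.prems that by (intro arg_cong[where f="\<lambda>v. _ *\<^sub>R (_ - v)"] local_pt_cong) auto
  then have "fc_Dbar gF B \<beta> K N st (\<xi> t) = fc_Dbar gF B \<beta> K N st' (\<xi>' t)"
    unfolding fc_Dbar_def by (intro arg_cong[where f="\<lambda>v. _ *\<^sub>R v"] sum.cong) auto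
  with IH delta show ?case
    by (simp add: Let_def st_def[symmetric] st'_def[symmetric])
qed simp

lemma sgrad_eq_mean_deviation:
  "B > 0 \<Longrightarrow> sgrad gF B i x s = (1 / real B) *\<^sub>R (\<Sum>b<B. (gF i x (s b) - g)) + g"
  unfolding sgrad_def by (simp add: sum_subtractf scaleR_diff_right sum_constant_scaleR)

lemma local_pt_unroll:
  "local_pt gF B \<beta> c i z s k = z - \<beta> *\<^sub>R (\<Sum>j<k. (sgrad gF B i (local_pt gF B \<beta> c i z s j) (s j) + c))"
  by (induction k) (simp_all add: algebra_simps)

lemma fedcanon_controls_sum_zero:
  assumes "N > 0" and "(\<Sum>i<N. c0 i) = 0"
  shows "(\<Sum>i<N. snd (fedcanon gF B \<alpha> \<beta> K N h z0 c0 \<xi> t) i) = 0"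
proof (induction t)
  case (Suc t)
  define st where "st = fedcanon gF B \<alpha> \<beta> K N h z0 c0 \<xi> t"
  define \<Delta> where "\<Delta> i = fc_delta gF B \<beta> K (snd st i) i (fst st) (\<xi> t i)" for i
  have "(\<Sum>i<N. snd (fedcanon gF B \<alpha> \<beta> K N h z0 c0 \<xi> (Suc t)) i)
      = (\<Sum>i<N. snd st i) + real N *\<^sub>R fc_Dbar gF B \<beta> K N st (\<xi> t) - (\<Sum>i<N. \<Delta> i)"
    by (simp add: Let_def st_def \<Delta>_def sum.distrib sum_subtractf sum_constant_scaleR)
  also have "real N *\<^sub>R fc_Dbar gF B \<beta> K N st (\<xi> t) = (\<Sum>i<N. \<Delta> i)"
    using assms(1) by (simp add: fc_Dbar_def \<Delta>_def)
  finally show ?case using Suc by (simp add: st_def)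
qed (use assms(2) in simp)

lemma drift_constants_le:
  fixes K :: nat
  assumes "K > 0"
  shows "48 / 7 * (real K - 1) \<le> 6 * (real K)\<^sup>2" and "96 / 7 * (real K - 1)\<^sup>2 \<le> 24 * (real K)\<^sup>2"
proof -
  have "real K \<ge> 1" using assms by simp
  moreover have "4 * real K \<le> (real K)\<^sup>2 + 4"
    using zero_le_power2[of "real K - 2"] by (simp add: power2_diff)
  ultimately show "48 / 7 * (real K - 1) \<le> 6 * (real K)\<^sup>2" by (simp add: field_simps)
  have "(real K - 1)\<^sup>2 \<le> (real K)\<^sup>2" using assms by (intro power_mono) auto
  then have "4 * (real K - 1)\<^sup>2 \<le> 7 * (real K)\<^sup>2" using zero_le_power2[of "real K"] by linarith
  then show "96 / 7 * (real K - 1)\<^sup>2 \<le> 24 * (real K)\<^sup>2" by (simp add: field_simps)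
qed

locale fedcanon_model = weakly_convex_prox h \<rho> \<alpha>
  for h :: "'a::euclidean_space \<Rightarrow> real" and \<rho> \<alpha> :: real +
  fixes M :: "'w measure" and D :: "nat \<Rightarrow> 'b measure"
    and X :: "nat \<Rightarrow> nat \<Rightarrow> nat \<Rightarrow> nat \<Rightarrow> 'w \<Rightarrow> 'b"
    and gF :: "nat \<Rightarrow> 'a \<Rightarrow> 'b \<Rightarrow> 'a" and gradf :: "nat \<Rightarrow> 'a \<Rightarrow> 'a"
    and N K B :: nat and L \<sigma> \<beta> :: real and z0 :: 'a and c0 :: "nat \<Rightarrow> 'a"
  assumes N_pos: "N > 0" and K_pos: "K > 0" and B_pos: "B > 0"
    and M_prob: "prob_space M"
    and D_prob: "\<forall>i<N. prob_space (D i)"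
    and X_indep: "prob_space.indep_vars M (\<lambda>(s, i, k, b). D i) (\<lambda>(s, i, k, b). X s i k b)
                    {(s, i, k, b). i < N \<and> k < K \<and> b < B}"
    and X_distr: "\<forall>s i k b. i < N \<longrightarrow> k < K \<longrightarrow> b < B \<longrightarrow> distr M (D i) (X s i k b) = D i"
    and L_pos: "L > 0"
    and gradf_lip: "\<forall>i<N. \<forall>x y. norm (gradf i x - gradf i y) \<le> L * norm (x - y)"
    and gF_measurable: "\<forall>i<N. (\<lambda>p. gF i (fst p) (snd p)) \<in> borel_measurable (borel \<Otimes>\<^sub>M D i)"
    and gF_unbiased: "\<forall>i<N. \<forall>x. integrable (D i) (gF i x) \<and> integral\<^sup>L (D i) (gF i x) = gradf i x"
    and gF_variance: "\<forall>i<N. \<forall>x. integrable (D i) (\<lambda>\<xi>. (norm (gF i x \<xi> - gradf i x))\<^sup>2)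
                   \<and> integral\<^sup>L (D i) (\<lambda>\<xi>. (norm (gF i x \<xi> - gradf i x))\<^sup>2) \<le> \<sigma>\<^sup>2"
    and c0_sum: "(\<Sum>i<N. c0 i) = 0"
    and beta_pos: "\<beta> > 0"
    and beta_bound: "24 * real K * (real K - 1) * L\<^sup>2 * \<beta>\<^sup>2 \<le> 1"
begin

sublocale P: prob_space M by (rule M_prob)

definition sample_idx :: "(nat \<times> nat \<times> nat \<times> nat) set" where
  "sample_idx = {(s, i, k, b). i < N \<and> k < K \<and> b < B}"

definition sample_law :: "nat \<times> nat \<times> nat \<times> nat \<Rightarrow> 'b measure" where
  "sample_law = (\<lambda>(s, i, k, b). D i)"

definition sample :: "nat \<times> nat \<times> nat \<times> nat \<Rightarrow> 'w \<Rightarrow> 'b" where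
  "sample = (\<lambda>(s, i, k, b). X s i k b)"

definition path :: "'w \<Rightarrow> nat \<Rightarrow> nat \<Rightarrow> nat \<Rightarrow> nat \<Rightarrow> 'b" where
  "path \<omega> = (\<lambda>s i k b. X s i k b \<omega>)"

(* Reads a family of samples indexed by J (an element of PiM J sample_law) as a sample path; it
   agrees with the actual path only on J. *)
definition to_path :: "(nat \<times> nat \<times> nat \<times> nat \<Rightarrow> 'b) \<Rightarrow> nat \<Rightarrow> nat \<Rightarrow> nat \<Rightarrow> nat \<Rightarrow> 'b" where
  "to_path u = (\<lambda>s i k b. u (s, i, k, b))"

definition server_pt :: "(nat \<Rightarrow> nat \<Rightarrow> nat \<Rightarrow> nat \<Rightarrow> 'b) \<Rightarrow> nat \<Rightarrow> 'a" where
  "server_pt \<xi> t = fst (fedcanon gF B \<alpha> \<beta> K N h z0 c0 \<xi> t)"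

definition control :: "(nat \<Rightarrow> nat \<Rightarrow> nat \<Rightarrow> nat \<Rightarrow> 'b) \<Rightarrow> nat \<Rightarrow> nat \<Rightarrow> 'a" where
  "control \<xi> t i = snd (fedcanon gF B \<alpha> \<beta> K N h z0 c0 \<xi> t) i"

definition local_iter :: "(nat \<Rightarrow> nat \<Rightarrow> nat \<Rightarrow> nat \<Rightarrow> 'b) \<Rightarrow> nat \<Rightarrow> nat \<Rightarrow> nat \<Rightarrow> 'a" where
  "local_iter \<xi> t i k = local_pt gF B \<beta> (control \<xi> t i) i (server_pt \<xi> t) (\<xi> t i) k"

definition noise :: "(nat \<Rightarrow> nat \<Rightarrow> nat \<Rightarrow> nat \<Rightarrow> 'b) \<Rightarrow> nat \<Rightarrow> nat \<Rightarrow> nat \<Rightarrow> nat \<Rightarrow> 'a" where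
  "noise \<xi> t i k b = gF i (local_iter \<xi> t i k) (\<xi> t i k b) - gradf i (local_iter \<xi> t i k)"

definition rounds_before :: "nat \<Rightarrow> (nat \<times> nat \<times> nat \<times> nat) set" where
  "rounds_before t = {(s, i, k, b). s < t \<and> i < N \<and> k < K \<and> b < B}"

definition local_history :: "nat \<Rightarrow> nat \<Rightarrow> nat \<Rightarrow> (nat \<times> nat \<times> nat \<times> nat) set" where
  "local_history t i k = rounds_before t \<union> {(s, i', k', b). s = t \<and> i' = i \<and> k' < k \<and> b < B}"

definition other_samples :: "nat \<Rightarrow> nat \<Rightarrow> nat \<Rightarrow> nat \<Rightarrow> (nat \<times> nat \<times> nat \<times> nat) set" where
  "other_samples t i k b = rounds_before (Suc t) - {(t, i, k, b)}"

definition samples_measurable :: "'m measure \<Rightarrow> ('m \<Rightarrow> nat \<Rightarrow> nat \<Rightarrow> nat \<Rightarrow> nat \<Rightarrow> 'b)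
    \<Rightarrow> (nat \<times> nat \<times> nat \<times> nat) set \<Rightarrow> bool" where
  "samples_measurable \<Omega> \<xi> S \<longleftrightarrow> (\<forall>s i k b. (s, i, k, b) \<in> S \<longrightarrow> (\<lambda>\<omega>. \<xi> \<omega> s i k b) \<in> measurable \<Omega> (D i))"

definition agree_on :: "(nat \<times> nat \<times> nat \<times> nat) set \<Rightarrow> (nat \<Rightarrow> nat \<Rightarrow> nat \<Rightarrow> nat \<Rightarrow> 'b)
    \<Rightarrow> (nat \<Rightarrow> nat \<Rightarrow> nat \<Rightarrow> nat \<Rightarrow> 'b) \<Rightarrow> bool" where
  "agree_on S \<xi> \<xi>' \<longleftrightarrow> (\<forall>s i k b. (s, i, k, b) \<in> S \<longrightarrow> \<xi> s i k b = \<xi>' s i k b)"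

lemma sample_indep: "P.indep_vars sample_law sample sample_idx"
  using X_indep unfolding sample_law_def sample_def sample_idx_def .

lemma sample_distr: "(t, i, k, b) \<in> sample_idx \<Longrightarrow> distr M (D i) (X t i k b) = D i"
  using X_distr by (simp add: sample_idx_def)

lemma gradf_lipschitz_on: "i < N \<Longrightarrow> L-lipschitz_on UNIV (gradf i)"
  using gradf_lip L_pos by (intro lipschitz_onI) (auto simp: dist_norm)

lemma continuous_on_gradf: "i < N \<Longrightarrow> continuous_on UNIV (gradf i)"
  by (rule lipschitz_on_continuous_on[OF gradf_lipschitz_on])

lemma measurable_gF:
  assumes "i < N" "x \<in> borel_measurable \<Omega>" "s \<in> measurable \<Omega> (D i)"
  shows "(\<lambda>\<omega>. gF i (x \<omega>) (s \<omega>)) \<in> borel_measurable \<Omega>"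
proof -
  have "(\<lambda>p. gF i (fst p) (snd p)) \<in> borel_measurable (borel \<Otimes>\<^sub>M D i)"
    using gF_measurable assms(1) by auto
  from measurable_compose[OF measurable_Pair[OF assms(2,3)] this] show ?thesis by simp
qed

lemma measurable_local_pt:
  assumes "i < N" "z \<in> borel_measurable \<Omega>" "c \<in> borel_measurable \<Omega>"
    "\<And>k' b. k' < k \<Longrightarrow> b < B \<Longrightarrow> (\<lambda>\<omega>. s \<omega> k' b) \<in> measurable \<Omega> (D i)"
  shows "(\<lambda>\<omega>. local_pt gF B \<beta> (c \<omega>) i (z \<omega>) (s \<omega>) k) \<in> borel_measurable \<Omega>"
  using assms(4)
proof (induction k)
  case (Suc k)
  then have x: "(\<lambda>\<omega>. local_pt gF B \<beta> (c \<omega>) i (z \<omega>) (s \<omega>) k) \<in> borel_measurable \<Omega>" by auto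
  have "(\<lambda>\<omega>. sgrad gF B i (local_pt gF B \<beta> (c \<omega>) i (z \<omega>) (s \<omega>) k) (s \<omega> k)) \<in> borel_measurable \<Omega>"
    unfolding sgrad_def using Suc.prems
    by (intro borel_measurable_scaleR borel_measurable_const borel_measurable_sum measurable_gF[OF assms(1) x]) auto
  then show ?case using x assms(3) by simp
qed (use assms(2) in simp)

lemma measurable_iterates:
  assumes "samples_measurable \<Omega> \<xi> (rounds_before t)"
  shows "(\<lambda>\<omega>. server_pt (\<xi> \<omega>) t) \<in> borel_measurable \<Omega>"
    and "i < N \<Longrightarrow> (\<lambda>\<omega>. control (\<xi> \<omega>) t i) \<in> borel_measurable \<Omega>"
proof -
  have "(\<lambda>\<omega>. server_pt (\<xi> \<omega>) t) \<in> borel_measurable \<Omega> \<and> (\<forall>i<N. (\<lambda>\<omega>. control (\<xi> \<omega>) t i) \<in> borel_measurable \<Omega>)"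
    using assms
  proof (induction t)
    case (Suc t)
    then have z: "(\<lambda>\<omega>. server_pt (\<xi> \<omega>) t) \<in> borel_measurable \<Omega>"
      and c: "\<And>i. i < N \<Longrightarrow> (\<lambda>\<omega>. control (\<xi> \<omega>) t i) \<in> borel_measurable \<Omega>"
      by (auto simp: samples_measurable_def rounds_before_def)
    have delta: "(\<lambda>\<omega>. fc_delta gF B \<beta> K (control (\<xi> \<omega>) t i) i (server_pt (\<xi> \<omega>) t) (\<xi> \<omega> t i)) \<in> borel_measurable \<Omega>"
      if i: "i < N" for i
      unfolding fc_delta_def using Suc.prems i
      by (intro borel_measurable_scaleR borel_measurable_const borel_measurable_diff z measurable_local_pt c)
        (auto simp: samples_measurable_def rounds_before_def)
    have Dbar: "(\<lambda>\<omega>. fc_Dbar gF B \<beta> K N (fedcanon gF B \<alpha> \<beta> K N h z0 c0 (\<xi> \<omega>) t) (\<xi> \<omega> t)) \<in> borel_measurable \<Omega>"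
      unfolding fc_Dbar_def using delta
      by (intro borel_measurable_scaleR borel_measurable_const borel_measurable_sum)
        (simp add: server_pt_def control_def)
    have "(\<lambda>\<omega>. prox \<alpha> h (server_pt (\<xi> \<omega>) t
        - \<alpha> *\<^sub>R fc_Dbar gF B \<beta> K N (fedcanon gF B \<alpha> \<beta> K N h z0 c0 (\<xi> \<omega>) t) (\<xi> \<omega> t))) \<in> borel_measurable \<Omega>"
      using z Dbar by (intro borel_measurable_continuous_on[OF continuous_on_prox] borel_measurable_diff
        borel_measurable_scaleR borel_measurable_const)
    then show ?case
      using c delta Dbar by (simp add: server_pt_def control_def Let_def)
  qed (simp add: server_pt_def control_def)
  then show "(\<lambda>\<omega>. server_pt (\<xi> \<omega>) t) \<in> borel_measurable \<Omega>"
    and "i < N \<Longrightarrow> (\<lambda>\<omega>. control (\<xi> \<omega>) t i) \<in> borel_measurable \<Omega>" by auto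
qed

lemma measurable_local_iter:
  assumes "samples_measurable \<Omega> \<xi> (local_history t i k)" "i < N"
  shows "(\<lambda>\<omega>. local_iter (\<xi> \<omega>) t i k) \<in> borel_measurable \<Omega>"
proof -
  have "samples_measurable \<Omega> \<xi> (rounds_before t)"
    using assms(1) by (auto simp: samples_measurable_def local_history_def)
  then show ?thesis unfolding local_iter_def
    using assms by (intro measurable_local_pt measurable_iterates)
      (auto simp: samples_measurable_def local_history_def)
qed

lemma measurable_noise:
  assumes "samples_measurable \<Omega> \<xi> (local_history t i k \<union> {(t, i, k, b)})" "i < N"
  shows "(\<lambda>\<omega>. noise (\<xi> \<omega>) t i k b) \<in> borel_measurable \<Omega>"
proof -
  have x: "(\<lambda>\<omega>. local_iter (\<xi> \<omega>) t i k) \<in> borel_measurable \<Omega>"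
    using assms by (intro measurable_local_iter) (auto simp: samples_measurable_def)
  have "(\<lambda>\<omega>. \<xi> \<omega> t i k b) \<in> measurable \<Omega> (D i)" using assms by (auto simp: samples_measurable_def)
  then show ?thesis unfolding noise_def
    using measurable_gF[OF assms(2) x] borel_measurable_continuous_on[OF continuous_on_gradf[OF assms(2)] x]
    by auto
qed

lemma samples_measurable_to_path: "S \<subseteq> J \<Longrightarrow> samples_measurable (PiM J sample_law) to_path S"
  unfolding samples_measurable_def to_path_def
  using measurable_component_singleton[of _ J sample_law] by (force simp: sample_law_def)

lemma iterates_agree:
  assumes "agree_on (rounds_before t) \<xi> \<xi>'"
  shows "server_pt \<xi> t = server_pt \<xi>' t" and "i < N \<Longrightarrow> control \<xi> t i = control \<xi>' t i"
proof -
  have "fst (fedcanon gF B \<alpha> \<beta> K N h z0 c0 \<xi> t) = fst (fedcanon gF B \<alpha> \<beta> K N h z0 c0 \<xi>' t)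
    \<and> (\<forall>i<N. snd (fedcanon gF B \<alpha> \<beta> K N h z0 c0 \<xi> t) i = snd (fedcanon gF B \<alpha> \<beta> K N h z0 c0 \<xi>' t) i)"
    using assms by (intro fedcanon_cong) (auto simp: agree_on_def rounds_before_def)
  then show "server_pt \<xi> t = server_pt \<xi>' t" and "i < N \<Longrightarrow> control \<xi> t i = control \<xi>' t i"
    by (auto simp: server_pt_def control_def)
qed

lemma local_iter_agree:
  assumes "agree_on (local_history t i k) \<xi> \<xi>'" "i < N"
  shows "local_iter \<xi> t i k = local_iter \<xi>' t i k"
proof -
  have "agree_on (rounds_before t) \<xi> \<xi>'" using assms(1) by (simp add: agree_on_def local_history_def)
  note iter = iterates_agree[OF this]
  show ?thesis
    unfolding local_iter_def iter(1) iter(2)[OF assms(2)]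
    using assms(1) by (intro local_pt_cong) (auto simp: agree_on_def local_history_def)
qed

lemma agree_on_mono: "agree_on S \<xi> \<xi>' \<Longrightarrow> S' \<subseteq> S \<Longrightarrow> agree_on S' \<xi> \<xi>'"
  unfolding agree_on_def by blast

lemma noise_agree:
  assumes "agree_on (local_history t i k \<union> {(t, i, k, b)}) \<xi> \<xi>'" "i < N"
  shows "noise \<xi> t i k b = noise \<xi>' t i k b"
  using assms local_iter_agree[of t i k \<xi> \<xi>'] by (auto simp: noise_def agree_on_def)

lemma path_agree_to_path: "agree_on J (path \<omega>) (to_path (restrict (\<lambda>j. sample j \<omega>) J))"
  by (simp add: agree_on_def path_def to_path_def sample_def)

lemma local_history_subset_other_samples:
  "k \<le> K \<Longrightarrow> i < N \<Longrightarrow> local_history t i k \<subseteq> other_samples t i k b"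
  by (auto simp: local_history_def rounds_before_def other_samples_def)

lemma other_samples_subset: "other_samples t i k b \<subseteq> sample_idx"
  by (auto simp: other_samples_def rounds_before_def sample_idx_def)

(* The local iterate x_i^{t,k} depends only on samples other than (t, i, k, b), so the noise term
   is a function of those samples and of the independent fresh sample (t, i, k, b). *)
definition noise_kernel :: "nat \<Rightarrow> nat \<Rightarrow> nat \<Rightarrow> (nat \<times> nat \<times> nat \<times> nat \<Rightarrow> 'b) \<times> 'b \<Rightarrow> 'a" where
  "noise_kernel t i k p =
     gF i (local_iter (to_path (fst p)) t i k) (snd p) - gradf i (local_iter (to_path (fst p)) t i k)"

lemma noise_eq_kernel:
  assumes "i < N" "k < K"
  shows "noise (path \<omega>) t i k b
    = noise_kernel t i k (restrict (\<lambda>j. sample j \<omega>) (other_samples t i k b), sample (t, i, k, b) \<omega>)"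
proof -
  have "local_iter (path \<omega>) t i k
      = local_iter (to_path (restrict (\<lambda>j. sample j \<omega>) (other_samples t i k b))) t i k"
    using assms by (intro local_iter_agree agree_on_mono[OF path_agree_to_path]
      local_history_subset_other_samples) auto
  then show ?thesis by (simp add: noise_def noise_kernel_def path_def sample_def)
qed

lemma measurable_noise_kernel:
  assumes "i < N" "k < K"
  shows "noise_kernel t i k \<in> borel_measurable (PiM (other_samples t i k b) sample_law \<Otimes>\<^sub>M D i)"
proof -
  have x: "(\<lambda>p. local_iter (to_path (fst p)) t i k)
      \<in> borel_measurable (PiM (other_samples t i k b) sample_law \<Otimes>\<^sub>M D i)"
    using assms by (intro measurable_compose[OF measurable_fst]
      measurable_local_iter[of _ "to_path"] samples_measurable_to_path local_history_subset_other_samples) auto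
  show ?thesis
    unfolding noise_kernel_def[abs_def]
    using measurable_gF[OF assms(1) x measurable_snd]
      borel_measurable_continuous_on[OF continuous_on_gradf[OF assms(1)] x]
    by (intro borel_measurable_diff) auto
qed


lemma noise_second_moment:
  assumes i: "i < N" and k: "k < K" and b: "b < B"
  shows "square_integrable M (\<lambda>\<omega>. noise (path \<omega>) t i k b)"
    and "(\<integral>\<omega>. (norm (noise (path \<omega>) t i k b))\<^sup>2 \<partial>M) \<le> \<sigma>\<^sup>2"
proof -
  have a: "(t, i, k, b) \<in> sample_idx" "(t, i, k, b) \<notin> other_samples t i k b"
    using i k b by (auto simp: sample_idx_def other_samples_def)
  have var: "integrable (distr M (sample_law (t, i, k, b)) (sample (t, i, k, b))) (\<lambda>w. (norm (noise_kernel t i k (u, w)))\<^sup>2)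
      \<and> (\<integral>w. (norm (noise_kernel t i k (u, w)))\<^sup>2 \<partial>distr M (sample_law (t, i, k, b)) (sample (t, i, k, b))) \<le> \<sigma>\<^sup>2"
    for u
    using gF_variance i sample_distr[OF a(1)]
    by (simp add: noise_kernel_def sample_law_def sample_def)
  note moment = P.indep_noise_second_moment[OF sample_indep other_samples_subset a,
      of "noise_kernel t i k", OF _ var]
  show "square_integrable M (\<lambda>\<omega>. noise (path \<omega>) t i k b)"
    and "(\<integral>\<omega>. (norm (noise (path \<omega>) t i k b))\<^sup>2 \<partial>M) \<le> \<sigma>\<^sup>2"
    using moment measurable_noise_kernel[OF i k] by (simp_all add: noise_eq_kernel[OF i k] sample_law_def)
qed

lemma noise_uncorrelated_le:
  assumes i: "i < N" and k: "k < K" and b: "b < B" and k': "k' \<le> k" and b': "b' < B"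
    and ne: "(k', b') \<noteq> (k, b)"
  shows "(\<integral>\<omega>. noise (path \<omega>) t i k b \<bullet> noise (path \<omega>) t i k' b' \<partial>M) = 0"
proof -
  let ?J = "other_samples t i k b"
  let ?R = "\<lambda>\<omega>. restrict (\<lambda>j. sample j \<omega>) ?J"
  define \<Psi> where "\<Psi> u = noise (to_path u) t i k' b'" for u
  have a: "(t, i, k, b) \<in> sample_idx" "(t, i, k, b) \<notin> ?J"
    using i k b by (auto simp: sample_idx_def other_samples_def)
  have sub: "local_history t i k' \<union> {(t, i, k', b')} \<subseteq> ?J"
    using k k' b' ne i by (auto simp: other_samples_def local_history_def rounds_before_def)
  have \<Psi>_eq: "noise (path \<omega>) t i k' b' = \<Psi> (?R \<omega>)" for \<omega>
    unfolding \<Psi>_def using i by (intro noise_agree agree_on_mono[OF path_agree_to_path sub])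
  have \<Psi>: "\<Psi> \<in> borel_measurable (PiM ?J sample_law)"
    unfolding \<Psi>_def using i sub by (intro measurable_noise samples_measurable_to_path)
  have mean: "integrable (distr M (sample_law (t, i, k, b)) (sample (t, i, k, b))) (\<lambda>w. noise_kernel t i k (u, w))
      \<and> (\<integral>w. noise_kernel t i k (u, w) \<partial>distr M (sample_law (t, i, k, b)) (sample (t, i, k, b))) = 0" for u
  proof -
    interpret Di: prob_space "D i" using D_prob i by auto
    show ?thesis
      using gF_unbiased i sample_distr[OF a(1)]
      by (simp add: noise_kernel_def sample_law_def sample_def Di.prob_space)
  qed
  have sq: "square_integrable M (\<lambda>\<omega>. noise_kernel t i k (?R \<omega>, sample (t, i, k, b) \<omega>))"
    "square_integrable M (\<lambda>\<omega>. \<Psi> (?R \<omega>))"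
    using noise_second_moment(1)[OF i k b] noise_second_moment(1)[OF i _ b', of k' t] k k'
    by (simp_all add: noise_eq_kernel[OF i k] \<Psi>_eq[symmetric])
  have law: "sample_law (t, i, k, b) = D i" by (simp add: sample_law_def)
  have "(\<integral>\<omega>. noise_kernel t i k (?R \<omega>, sample (t, i, k, b) \<omega>) \<bullet> \<Psi> (?R \<omega>) \<partial>M) = 0"
    using P.indep_noise_uncorrelated[OF sample_indep other_samples_subset a _ \<Psi> mean sq]
      measurable_noise_kernel[OF i k, of t b] unfolding law by blast
  then show ?thesis by (simp add: noise_eq_kernel[OF i k] \<Psi>_eq)
qed

lemma noise_uncorrelated:
  assumes "i < N" and "k < K" "b < B" and "k' < K" "b' < B" and "(k, b) \<noteq> (k', b')"
  shows "(\<integral>\<omega>. noise (path \<omega>) t i k b \<bullet> noise (path \<omega>) t i k' b' \<partial>M) = 0"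
proof (cases "k' \<le> k")
  case False
  then have "(\<integral>\<omega>. noise (path \<omega>) t i k' b' \<bullet> noise (path \<omega>) t i k b \<partial>M) = 0"
    using assms by (intro noise_uncorrelated_le) auto
  then show ?thesis by (simp add: inner_commute)
qed (use assms noise_uncorrelated_le in auto)

lemma noise_sum_second_moment:
  assumes i: "i < N" and kk: "kk \<le> K"
  shows "square_integrable M (\<lambda>\<omega>. \<Sum>j<kk. \<Sum>b<B. noise (path \<omega>) t i j b)"
    and "(\<integral>\<omega>. (norm (\<Sum>j<kk. \<Sum>b<B. noise (path \<omega>) t i j b))\<^sup>2 \<partial>M) \<le> real kk * real B * \<sigma>\<^sup>2"
proof -
  define Z where "Z = (\<lambda>p \<omega>. noise (path \<omega>) t i (fst p) (snd p))"
  have sum_eq: "(\<Sum>j<kk. \<Sum>b<B. noise (path \<omega>) t i j b) = (\<Sum>p\<in>{..<kk} \<times> {..<B}. Z p \<omega>)" for \<omega>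
    by (simp add: Z_def sum.cartesian_product case_prod_beta)
  have Z: "square_integrable M (Z p)" "(\<integral>\<omega>. (norm (Z p \<omega>))\<^sup>2 \<partial>M) \<le> \<sigma>\<^sup>2"
    if "p \<in> {..<kk} \<times> {..<B}" for p
    using that kk noise_second_moment[OF i, of "fst p" "snd p" t] by (auto simp: Z_def)
  show "square_integrable M (\<lambda>\<omega>. \<Sum>j<kk. \<Sum>b<B. noise (path \<omega>) t i j b)"
    unfolding sum_eq using Z(1) by (rule square_integrable_sum)
  have "(\<integral>\<omega>. (norm (\<Sum>p\<in>{..<kk} \<times> {..<B}. Z p \<omega>))\<^sup>2 \<partial>M) \<le> real (card ({..<kk} \<times> {..<B})) * \<sigma>\<^sup>2"
    using Z kk noise_uncorrelated[OF i]
    by (intro integral_norm_sum_sq_orthogonal) (auto simp: Z_def prod_eq_iff)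
  then show "(\<integral>\<omega>. (norm (\<Sum>j<kk. \<Sum>b<B. noise (path \<omega>) t i j b))\<^sup>2 \<partial>M) \<le> real kk * real B * \<sigma>\<^sup>2"
    by (simp add: sum_eq card_cartesian_product)
qed


definition grad_avg :: "'a \<Rightarrow> 'a" where
  "grad_avg x = (1 / real N) *\<^sub>R (\<Sum>i<N. gradf i x)"

abbreviation z_at :: "nat \<Rightarrow> 'w \<Rightarrow> 'a" where
  "z_at t \<omega> \<equiv> server_pt (path \<omega>) t"

abbreviation c_at :: "nat \<Rightarrow> nat \<Rightarrow> 'w \<Rightarrow> 'a" where
  "c_at t i \<omega> \<equiv> control (path \<omega>) t i"

abbreviation x_at :: "nat \<Rightarrow> nat \<Rightarrow> nat \<Rightarrow> 'w \<Rightarrow> 'a" where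
  "x_at t i k \<omega> \<equiv> local_iter (path \<omega>) t i k"

abbreviation noise_at :: "nat \<Rightarrow> nat \<Rightarrow> nat \<Rightarrow> nat \<Rightarrow> 'w \<Rightarrow> 'a" where
  "noise_at t i k b \<omega> \<equiv> noise (path \<omega>) t i k b"

abbreviation delta_at :: "nat \<Rightarrow> nat \<Rightarrow> 'w \<Rightarrow> 'a" where
  "delta_at t i \<omega> \<equiv> fc_delta gF B \<beta> K (c_at t i \<omega>) i (z_at t \<omega>) (path \<omega> t i)"

abbreviation delta_avg :: "nat \<Rightarrow> 'w \<Rightarrow> 'a" where
  "delta_avg t \<omega> \<equiv> fc_Dbar gF B \<beta> K N (fedcanon gF B \<alpha> \<beta> K N h z0 c0 (path \<omega>) t) (path \<omega> t)"

lemma server_pt_Suc: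
  "server_pt \<xi> (Suc t) = prox \<alpha> h (server_pt \<xi> t - \<alpha> *\<^sub>R fc_Dbar gF B \<beta> K N (fedcanon gF B \<alpha> \<beta> K N h z0 c0 \<xi> t) (\<xi> t))"
  by (simp add: server_pt_def Let_def)

lemma control_Suc:
  "control \<xi> (Suc t) i = control \<xi> t i + fc_Dbar gF B \<beta> K N (fedcanon gF B \<alpha> \<beta> K N h z0 c0 \<xi> t) (\<xi> t)
     - fc_delta gF B \<beta> K (control \<xi> t i) i (server_pt \<xi> t) (\<xi> t i)"
  by (simp add: server_pt_def control_def Let_def)

lemma fc_Dbar_eq_avg:
  "fc_Dbar gF B \<beta> K N (fedcanon gF B \<alpha> \<beta> K N h z0 c0 \<xi> t) (\<xi> t)
    = (1 / real N) *\<^sub>R (\<Sum>i<N. fc_delta gF B \<beta> K (control \<xi> t i) i (server_pt \<xi> t) (\<xi> t i))"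
  by (simp add: fc_Dbar_def server_pt_def control_def)

lemma local_iter_Suc:
  "local_iter \<xi> t i (Suc k) = local_iter \<xi> t i k
     - \<beta> *\<^sub>R ((1 / real B) *\<^sub>R (\<Sum>b<B. noise \<xi> t i k b) + gradf i (local_iter \<xi> t i k) + control \<xi> t i)"
  using sgrad_eq_mean_deviation[OF B_pos, of gF i "local_iter \<xi> t i k" "\<xi> t i k" "gradf i (local_iter \<xi> t i k)"]
  by (simp add: local_iter_def noise_def algebra_simps)

lemma local_iter_deviation:
  "local_iter \<xi> t i k - server_pt \<xi> t = - \<beta> *\<^sub>R ((1 / real B) *\<^sub>R (\<Sum>j<k. \<Sum>b<B. noise \<xi> t i j b)
      + (\<Sum>j<k. (gradf i (local_iter \<xi> t i j) - gradf i (server_pt \<xi> t)))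
      + real k *\<^sub>R (gradf i (server_pt \<xi> t) + control \<xi> t i))"
proof -
  define z where "z = server_pt \<xi> t"
  define c where "c = control \<xi> t i"
  have "sgrad gF B i (local_iter \<xi> t i j) (\<xi> t i j) + c
      = (1 / real B) *\<^sub>R (\<Sum>b<B. noise \<xi> t i j b) + (gradf i (local_iter \<xi> t i j) - gradf i z) + (gradf i z + c)"
    for j
    using sgrad_eq_mean_deviation[OF B_pos, of gF i "local_iter \<xi> t i j" "\<xi> t i j" "gradf i (local_iter \<xi> t i j)"]
    by (simp add: noise_def)
  then have "(\<Sum>j<k. sgrad gF B i (local_iter \<xi> t i j) (\<xi> t i j) + c)
      = (\<Sum>j<k. (1 / real B) *\<^sub>R (\<Sum>b<B. noise \<xi> t i j b) + (gradf i (local_iter \<xi> t i j) - gradf i z)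
          + (gradf i z + c))"
    by (intro sum.cong) auto
  also have "\<dots> = (1 / real B) *\<^sub>R (\<Sum>j<k. \<Sum>b<B. noise \<xi> t i j b)
      + (\<Sum>j<k. gradf i (local_iter \<xi> t i j) - gradf i z) + real k *\<^sub>R (gradf i z + c)"
    by (simp add: sum.distrib scaleR_sum_right sum_subtractf sum_constant_scaleR scaleR_add_right)
  finally have "(\<Sum>j<k. sgrad gF B i (local_iter \<xi> t i j) (\<xi> t i j) + c)
      = (1 / real B) *\<^sub>R (\<Sum>j<k. \<Sum>b<B. noise \<xi> t i j b)
      + (\<Sum>j<k. gradf i (local_iter \<xi> t i j) - gradf i z) + real k *\<^sub>R (gradf i z + c)" .
  moreover have "local_iter \<xi> t i k = z - \<beta> *\<^sub>R (\<Sum>j<k. sgrad gF B i (local_iter \<xi> t i j) (\<xi> t i j) + c)"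
    unfolding local_iter_def z_def c_def by (subst local_pt_unroll) simp
  ultimately show ?thesis by (simp add: z_def c_def)
qed

lemma client_direction_error:
  "fc_delta gF B \<beta> K (control \<xi> t i) i (server_pt \<xi> t) (\<xi> t i) - gradf i (server_pt \<xi> t) - control \<xi> t i
    = (1 / (real K * real B)) *\<^sub>R (\<Sum>j<K. \<Sum>b<B. noise \<xi> t i j b)
      + (1 / real K) *\<^sub>R (\<Sum>j<K. (gradf i (local_iter \<xi> t i j) - gradf i (server_pt \<xi> t)))"
proof -
  have "fc_delta gF B \<beta> K (control \<xi> t i) i (server_pt \<xi> t) (\<xi> t i)
      = (1 / (\<beta> * real K)) *\<^sub>R (server_pt \<xi> t - local_iter \<xi> t i K)"
    by (simp add: fc_delta_def local_iter_def)
  also have "server_pt \<xi> t - local_iter \<xi> t i K = - (local_iter \<xi> t i K - server_pt \<xi> t)" by simp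
  finally show ?thesis
    unfolding local_iter_deviation using beta_pos K_pos by (simp add: algebra_simps)
qed

lemma direction_error_avg:
  "fc_Dbar gF B \<beta> K N (fedcanon gF B \<alpha> \<beta> K N h z0 c0 \<xi> t) (\<xi> t) - grad_avg (server_pt \<xi> t)
    = (1 / real N) *\<^sub>R (\<Sum>i<N. (fc_delta gF B \<beta> K (control \<xi> t i) i (server_pt \<xi> t) (\<xi> t i)
        - gradf i (server_pt \<xi> t) - control \<xi> t i))"
  using fedcanon_controls_sum_zero[OF N_pos c0_sum, of gF B \<alpha> \<beta> K h z0 \<xi> t]
  by (simp add: fc_Dbar_eq_avg grad_avg_def sum_subtractf control_def scaleR_diff_right)

lemma square_integrable_gradf: "i < N \<Longrightarrow> square_integrable M f \<Longrightarrow> square_integrable M (\<lambda>\<omega>. gradf i (f \<omega>))"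
  by (rule P.square_integrable_lipschitz_compose[OF _ gradf_lipschitz_on])

lemma square_integrable_grad_avg: "square_integrable M f \<Longrightarrow> square_integrable M (\<lambda>\<omega>. grad_avg (f \<omega>))"
  unfolding grad_avg_def by (intro square_integrable_scaleR square_integrable_sum square_integrable_gradf) auto

lemma square_integrable_prox:
  assumes "square_integrable M f"
  shows "square_integrable M (\<lambda>\<omega>. prox \<alpha> h (f \<omega>))"
proof (rule P.square_integrable_lipschitz_compose[OF assms])
  show "(1 / (1 - \<alpha> * \<rho>))-lipschitz_on UNIV (prox \<alpha> h)"
    using prox_lipschitz alpha_rho by (intro lipschitz_onI) (auto simp: dist_norm)
qed

lemma square_integrable_local_iter:
  assumes z: "square_integrable M (z_at t)" and c: "square_integrable M (c_at t i)" and i: "i < N"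
  shows "k \<le> K \<Longrightarrow> square_integrable M (x_at t i k)"
proof (induction k)
  case (Suc k)
  have "square_integrable M (\<lambda>\<omega>. x_at t i k \<omega>
      - \<beta> *\<^sub>R ((1 / real B) *\<^sub>R (\<Sum>b<B. noise_at t i k b \<omega>) + gradf i (x_at t i k \<omega>) + c_at t i \<omega>))"
    using Suc noise_second_moment(1)[OF i]
    by (intro square_integrable_diff square_integrable_scaleR square_integrable_add
        square_integrable_sum square_integrable_gradf[OF i] c) auto
  then show ?case by (simp add: local_iter_Suc)
qed (simp add: local_iter_def z)

lemma square_integrable_iterates: "square_integrable M (z_at t) \<and> (\<forall>i<N. square_integrable M (c_at t i))"
proof (induction t)
  case 0
  then show ?case by (simp add: server_pt_def control_def P.square_integrable_const)
next
  case (Suc t)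
  then have z: "square_integrable M (z_at t)" and c: "\<And>i. i < N \<Longrightarrow> square_integrable M (c_at t i)" by auto
  have delta: "square_integrable M (delta_at t i)" if i: "i < N" for i
    unfolding fc_delta_def local_iter_def[symmetric]
    by (intro square_integrable_scaleR square_integrable_diff z square_integrable_local_iter[OF z c[OF i] i]) simp
  have "square_integrable M (delta_avg t)"
    unfolding fc_Dbar_eq_avg using delta by (intro square_integrable_scaleR square_integrable_sum) auto
  then show ?case
    using z c delta
    by (auto simp: server_pt_Suc control_Suc intro!: square_integrable_prox square_integrable_diff
        square_integrable_scaleR square_integrable_add)
qed

lemma square_integrable_z_at: "square_integrable M (z_at t)"
  and square_integrable_c_at: "i < N \<Longrightarrow> square_integrable M (c_at t i)"
  using square_integrable_iterates by auto

lemma square_integrable_x_at: "i < N \<Longrightarrow> k \<le> K \<Longrightarrow> square_integrable M (x_at t i k)"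
  using square_integrable_local_iter square_integrable_z_at square_integrable_c_at by blast

lemma square_integrable_delta_at: "i < N \<Longrightarrow> square_integrable M (delta_at t i)"
  unfolding fc_delta_def local_iter_def[symmetric]
  by (intro square_integrable_scaleR square_integrable_diff square_integrable_z_at square_integrable_x_at) auto

lemma square_integrable_delta_avg: "square_integrable M (delta_avg t)"
  unfolding fc_Dbar_eq_avg using square_integrable_delta_at
  by (intro square_integrable_scaleR square_integrable_sum) auto

section \<open>Client drift and the error of the aggregated direction\<close>

lemma norm_sum_gradf_diff_sq_le:
  assumes "i < N"
  shows "(norm (\<Sum>j\<in>S. gradf i (x j) - gradf i z))\<^sup>2 \<le> real (card S) * L\<^sup>2 * (\<Sum>j\<in>S. (norm (x j - z))\<^sup>2)"
proof -
  have "(norm (gradf i (x j) - gradf i z))\<^sup>2 \<le> L\<^sup>2 * (norm (x j - z))\<^sup>2" for j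
  proof -
    have "norm (gradf i (x j) - gradf i z) \<le> L * norm (x j - z)" using gradf_lip assms by auto
    then show ?thesis by (metis norm_ge_zero power_mono power_mult_distrib)
  qed
  then have "(\<Sum>j\<in>S. (norm (gradf i (x j) - gradf i z))\<^sup>2) \<le> L\<^sup>2 * (\<Sum>j\<in>S. (norm (x j - z))\<^sup>2)"
    by (simp add: sum_distrib_left sum_mono)
  then have "real (card S) * (\<Sum>j\<in>S. (norm (gradf i (x j) - gradf i z))\<^sup>2)
      \<le> real (card S) * (L\<^sup>2 * (\<Sum>j\<in>S. (norm (x j - z))\<^sup>2))"
    by (rule mult_left_mono) simp
  with norm_sum_sq_le[of "\<lambda>j. gradf i (x j) - gradf i z" S] show ?thesis
    by (simp add: mult.assoc)
qed

lemma local_drift_sq_le: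
  assumes i: "i < N" and k: "k < K"
  shows "(norm (x_at t i k \<omega> - z_at t \<omega>))\<^sup>2
    \<le> 3 * \<beta>\<^sup>2 * ((1 / real B)\<^sup>2 * (norm (\<Sum>j<k. \<Sum>b<B. noise_at t i j b \<omega>))\<^sup>2
      + (real K - 1) * L\<^sup>2 * (\<Sum>j<K. (norm (x_at t i j \<omega> - z_at t \<omega>))\<^sup>2)
      + (real K - 1)\<^sup>2 * (norm (gradf i (z_at t \<omega>) + c_at t i \<omega>))\<^sup>2)"
proof -
  define u where "u = (1 / real B) *\<^sub>R (\<Sum>j<k. \<Sum>b<B. noise_at t i j b \<omega>)"
  define v where "v = (\<Sum>j<k. gradf i (x_at t i j \<omega>) - gradf i (z_at t \<omega>))"
  define w where "w = real k *\<^sub>R (gradf i (z_at t \<omega>) + c_at t i \<omega>)"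
  define S where "S = (\<Sum>j<K. (norm (x_at t i j \<omega> - z_at t \<omega>))\<^sup>2)"
  have kK: "real k \<le> real K - 1" using k by linarith
  have "(norm v)\<^sup>2 \<le> real k * L\<^sup>2 * (\<Sum>j<k. (norm (x_at t i j \<omega> - z_at t \<omega>))\<^sup>2)"
    using norm_sum_gradf_diff_sq_le[OF i, where S="{..<k}" and x="\<lambda>j. x_at t i j \<omega>" and z="z_at t \<omega>"]
    unfolding v_def by simp
  also have "\<dots> \<le> (real K - 1) * L\<^sup>2 * S"
    unfolding S_def using k kK by (intro mult_mono mult_right_mono sum_mono2 sum_nonneg) auto
  finally have "(norm v)\<^sup>2 \<le> (real K - 1) * L\<^sup>2 * S" .
  moreover have "(norm w)\<^sup>2 \<le> (real K - 1)\<^sup>2 * (norm (gradf i (z_at t \<omega>) + c_at t i \<omega>))\<^sup>2"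
    unfolding w_def using kK by (simp add: power_mult_distrib mult_right_mono power_mono)
  moreover have "(norm u)\<^sup>2 \<le> (1 / real B)\<^sup>2 * (norm (\<Sum>j<k. \<Sum>b<B. noise_at t i j b \<omega>))\<^sup>2"
    unfolding u_def by (simp add: power_mult_distrib power_divide)
  ultimately have "3 * ((norm u)\<^sup>2 + (norm v)\<^sup>2 + (norm w)\<^sup>2) \<le> 3 * ((1 / real B)\<^sup>2
      * (norm (\<Sum>j<k. \<Sum>b<B. noise_at t i j b \<omega>))\<^sup>2 + (real K - 1) * L\<^sup>2 * S
      + (real K - 1)\<^sup>2 * (norm (gradf i (z_at t \<omega>) + c_at t i \<omega>))\<^sup>2)"
    by (intro mult_left_mono add_mono) simp_all
  then have "\<beta>\<^sup>2 * (norm (u + v + w))\<^sup>2 \<le> \<beta>\<^sup>2 * (3 * ((1 / real B)\<^sup>2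
      * (norm (\<Sum>j<k. \<Sum>b<B. noise_at t i j b \<omega>))\<^sup>2 + (real K - 1) * L\<^sup>2 * S
      + (real K - 1)\<^sup>2 * (norm (gradf i (z_at t \<omega>) + c_at t i \<omega>))\<^sup>2))"
    using norm_add3_sq_le[of u v w] by (intro mult_left_mono) simp_all
  moreover have "(norm (x_at t i k \<omega> - z_at t \<omega>))\<^sup>2 = \<beta>\<^sup>2 * (norm (u + v + w))\<^sup>2"
    unfolding local_iter_deviation u_def v_def w_def by (simp add: power_mult_distrib)
  ultimately show ?thesis unfolding S_def by (simp only: ac_simps)
qed

lemma expected_local_drift_le:
  assumes i: "i < N" and k: "k < K"
  shows "(\<integral>\<omega>. (norm (x_at t i k \<omega> - z_at t \<omega>))\<^sup>2 \<partial>M)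
    \<le> 3 * \<beta>\<^sup>2 * ((real K - 1) * \<sigma>\<^sup>2 / real B
      + (real K - 1) * L\<^sup>2 * (\<Sum>j<K. \<integral>\<omega>. (norm (x_at t i j \<omega> - z_at t \<omega>))\<^sup>2 \<partial>M)
      + (real K - 1)\<^sup>2 * (\<integral>\<omega>. (norm (gradf i (z_at t \<omega>) + c_at t i \<omega>))\<^sup>2 \<partial>M))"
proof -
  define n where "n \<omega> = (norm (\<Sum>j<k. \<Sum>b<B. noise_at t i j b \<omega>))\<^sup>2" for \<omega>
  define s where "s \<omega> = (\<Sum>j<K. (norm (x_at t i j \<omega> - z_at t \<omega>))\<^sup>2)" for \<omega>
  define g where "g \<omega> = (norm (gradf i (z_at t \<omega>) + c_at t i \<omega>))\<^sup>2" for \<omega>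
  have drift: "integrable M (\<lambda>\<omega>. (norm (x_at t i j \<omega> - z_at t \<omega>))\<^sup>2)" if "j \<le> K" for j
    using that i by (intro square_integrableD(2) square_integrable_diff square_integrable_x_at square_integrable_z_at)
  then have s: "integrable M s" "(\<integral>\<omega>. s \<omega> \<partial>M) = (\<Sum>j<K. \<integral>\<omega>. (norm (x_at t i j \<omega> - z_at t \<omega>))\<^sup>2 \<partial>M)"
    unfolding s_def by (auto simp: Bochner_Integration.integral_sum)
  have g: "integrable M g"
    unfolding g_def using i by (intro square_integrableD(2) square_integrable_add square_integrable_gradf
        square_integrable_z_at square_integrable_c_at)
  have n: "integrable M n"
    unfolding n_def using k by (intro square_integrableD(2) noise_sum_second_moment(1)[OF i]) simp
  have "real k \<le> real K - 1" using k by linarith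
  then have "real k * real B * \<sigma>\<^sup>2 \<le> (real K - 1) * real B * \<sigma>\<^sup>2"
    by (intro mult_right_mono) auto
  then have "(1 / real B)\<^sup>2 * (\<integral>\<omega>. n \<omega> \<partial>M) \<le> (1 / real B)\<^sup>2 * ((real K - 1) * real B * \<sigma>\<^sup>2)"
    unfolding n_def using noise_sum_second_moment(2)[OF i, of k t] k by (intro mult_left_mono) auto
  also have "\<dots> = (real K - 1) * \<sigma>\<^sup>2 / real B" using B_pos by (simp add: power2_eq_square)
  finally have noise_bound: "(1 / real B)\<^sup>2 * (\<integral>\<omega>. n \<omega> \<partial>M) \<le> (real K - 1) * \<sigma>\<^sup>2 / real B" .
  have "(\<integral>\<omega>. (norm (x_at t i k \<omega> - z_at t \<omega>))\<^sup>2 \<partial>M)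
      \<le> (\<integral>\<omega>. 3 * \<beta>\<^sup>2 * ((1 / real B)\<^sup>2 * n \<omega> + (real K - 1) * L\<^sup>2 * s \<omega> + (real K - 1)\<^sup>2 * g \<omega>) \<partial>M)"
    using drift k n s g local_drift_sq_le[OF i k] unfolding n_def s_def g_def by (intro integral_mono) auto
  also have "\<dots> = 3 * \<beta>\<^sup>2 * ((1 / real B)\<^sup>2 * (\<integral>\<omega>. n \<omega> \<partial>M) + (real K - 1) * L\<^sup>2 * (\<integral>\<omega>. s \<omega> \<partial>M)
      + (real K - 1)\<^sup>2 * (\<integral>\<omega>. g \<omega> \<partial>M))"
    using n s g by simp
  also have "\<dots> \<le> 3 * \<beta>\<^sup>2 * ((real K - 1) * \<sigma>\<^sup>2 / real B + (real K - 1) * L\<^sup>2 * (\<integral>\<omega>. s \<omega> \<partial>M)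
      + (real K - 1)\<^sup>2 * (\<integral>\<omega>. g \<omega> \<partial>M))"
    using noise_bound by (intro mult_left_mono add_right_mono) auto
  finally show ?thesis unfolding s(2) g_def .
qed

lemma local_drift_bound:
  fixes t :: nat
  assumes i: "i < N"
  defines "A \<equiv> (\<integral>\<omega>. (norm (gradf i (z_at t \<omega>) + c_at t i \<omega>))\<^sup>2 \<partial>M)"
  shows "(\<Sum>k<K. \<integral>\<omega>. (norm (x_at t i k \<omega> - z_at t \<omega>))\<^sup>2 \<partial>M)
    \<le> 8 / 7 * (3 * \<beta>\<^sup>2 * real K * (real K - 1) * (\<sigma>\<^sup>2 / real B + (real K - 1) * A))"
proof -
  define S where "S = (\<Sum>k<K. \<integral>\<omega>. (norm (x_at t i k \<omega> - z_at t \<omega>))\<^sup>2 \<partial>M)"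
  define c where "c = 3 * \<beta>\<^sup>2 * real K * (real K - 1) * L\<^sup>2"
  define R where "R = 3 * \<beta>\<^sup>2 * real K * (real K - 1) * (\<sigma>\<^sup>2 / real B + (real K - 1) * A)"
  have "S \<le> real K * (3 * \<beta>\<^sup>2 * ((real K - 1) * \<sigma>\<^sup>2 / real B + (real K - 1) * L\<^sup>2 * S + (real K - 1)\<^sup>2 * A))"
    unfolding S_def A_def using expected_local_drift_le[OF i]
      sum_bounded_above[of "{..<K}" "\<lambda>k. \<integral>\<omega>. (norm (x_at t i k \<omega> - z_at t \<omega>))\<^sup>2 \<partial>M"] by simp
  also have "\<dots> = c * S + R"
    unfolding c_def R_def using B_pos by (simp add: field_simps power2_eq_square)
  finally have "S \<le> c * S + R" .
  moreover have "c * S \<le> 1 / 8 * S"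
    using beta_bound unfolding c_def S_def
    by (intro mult_right_mono sum_nonneg integral_nonneg_AE) (auto simp: algebra_simps)
  ultimately show ?thesis unfolding S_def[symmetric] R_def[symmetric] by linarith
qed

lemma client_error_sq_le:
  assumes i: "i < N"
  shows "(norm (delta_at t i \<omega> - gradf i (z_at t \<omega>) - c_at t i \<omega>))\<^sup>2
    \<le> 2 * (1 / (real K * real B))\<^sup>2 * (norm (\<Sum>j<K. \<Sum>b<B. noise_at t i j b \<omega>))\<^sup>2
      + 2 * L\<^sup>2 / real K * (\<Sum>j<K. (norm (x_at t i j \<omega> - z_at t \<omega>))\<^sup>2)"
proof -
  define d where "d = (\<Sum>j<K. gradf i (x_at t i j \<omega>) - gradf i (z_at t \<omega>))"
  have "(norm ((1 / real K) *\<^sub>R d))\<^sup>2 = (norm d)\<^sup>2 / (real K)\<^sup>2"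
    by (simp add: power_mult_distrib power_divide)
  also have "\<dots> \<le> real K * L\<^sup>2 * (\<Sum>j<K. (norm (x_at t i j \<omega> - z_at t \<omega>))\<^sup>2) / (real K)\<^sup>2"
    using norm_sum_gradf_diff_sq_le[OF i, where S="{..<K}" and x="\<lambda>j. x_at t i j \<omega>" and z="z_at t \<omega>"]
    unfolding d_def by (intro divide_right_mono) auto
  also have "\<dots> = L\<^sup>2 / real K * (\<Sum>j<K. (norm (x_at t i j \<omega> - z_at t \<omega>))\<^sup>2)"
    using K_pos by (simp add: power2_eq_square field_simps)
  finally have "(norm ((1 / real K) *\<^sub>R d))\<^sup>2 \<le> L\<^sup>2 / real K * (\<Sum>j<K. (norm (x_at t i j \<omega> - z_at t \<omega>))\<^sup>2)" .
  moreover have "(norm ((1 / (real K * real B)) *\<^sub>R (\<Sum>j<K. \<Sum>b<B. noise_at t i j b \<omega>)))\<^sup>2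
      = (1 / (real K * real B))\<^sup>2 * (norm (\<Sum>j<K. \<Sum>b<B. noise_at t i j b \<omega>))\<^sup>2"
    using K_pos B_pos by (simp add: power_mult_distrib power_divide)
  ultimately show ?thesis
    unfolding client_direction_error d_def[symmetric]
    using norm_add_sq_le[of "(1 / (real K * real B)) *\<^sub>R (\<Sum>j<K. \<Sum>b<B. noise_at t i j b \<omega>)" "(1 / real K) *\<^sub>R d"]
    by linarith
qed

lemma client_error_bound:
  fixes t :: nat
  assumes i: "i < N"
  defines "A \<equiv> (\<integral>\<omega>. (norm (gradf i (z_at t \<omega>) + c_at t i \<omega>))\<^sup>2 \<partial>M)"
  shows "(\<integral>\<omega>. (norm (delta_at t i \<omega> - gradf i (z_at t \<omega>) - c_at t i \<omega>))\<^sup>2 \<partial>M)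
    \<le> 2 * \<sigma>\<^sup>2 / (real K * real B) + 48 / 7 * L\<^sup>2 * \<beta>\<^sup>2 * (real K - 1) * (\<sigma>\<^sup>2 / real B + (real K - 1) * A)"
proof -
  define S where "S = (\<Sum>k<K. \<integral>\<omega>. (norm (x_at t i k \<omega> - z_at t \<omega>))\<^sup>2 \<partial>M)"
  define n where "n \<omega> = (norm (\<Sum>j<K. \<Sum>b<B. noise_at t i j b \<omega>))\<^sup>2" for \<omega>
  define s where "s \<omega> = (\<Sum>j<K. (norm (x_at t i j \<omega> - z_at t \<omega>))\<^sup>2)" for \<omega>
  have n: "integrable M n"
    unfolding n_def by (intro square_integrableD(2) noise_sum_second_moment(1)[OF i]) simp
  have drift: "integrable M (\<lambda>\<omega>. (norm (x_at t i j \<omega> - z_at t \<omega>))\<^sup>2)" if "j \<le> K" for j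
    using that i by (intro square_integrableD(2) square_integrable_diff square_integrable_x_at square_integrable_z_at)
  then have s: "integrable M s" and "(\<integral>\<omega>. s \<omega> \<partial>M) = S"
    unfolding s_def S_def by (auto simp: Bochner_Integration.integral_sum)
  have err: "integrable M (\<lambda>\<omega>. (norm (delta_at t i \<omega> - gradf i (z_at t \<omega>) - c_at t i \<omega>))\<^sup>2)"
    using i by (intro square_integrableD(2) square_integrable_diff square_integrable_delta_at
        square_integrable_gradf square_integrable_z_at square_integrable_c_at)
  have "(\<integral>\<omega>. (norm (delta_at t i \<omega> - gradf i (z_at t \<omega>) - c_at t i \<omega>))\<^sup>2 \<partial>M)
      \<le> (\<integral>\<omega>. 2 * (1 / (real K * real B))\<^sup>2 * n \<omega> + 2 * L\<^sup>2 / real K * s \<omega> \<partial>M)"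
    using err n s client_error_sq_le[OF i] unfolding n_def s_def by (intro integral_mono) auto
  also have "\<dots> = 2 * (1 / (real K * real B))\<^sup>2 * (\<integral>\<omega>. n \<omega> \<partial>M) + 2 * L\<^sup>2 / real K * S"
    using n s \<open>(\<integral>\<omega>. s \<omega> \<partial>M) = S\<close> by simp
  also have "2 * (1 / (real K * real B))\<^sup>2 * (\<integral>\<omega>. n \<omega> \<partial>M) \<le> 2 * (1 / (real K * real B))\<^sup>2 * (real K * real B * \<sigma>\<^sup>2)"
    unfolding n_def using noise_sum_second_moment(2)[OF i, of K t] by (intro mult_left_mono) auto
  also have "2 * L\<^sup>2 / real K * S \<le> 2 * L\<^sup>2 / real K * (8 / 7 * (3 * \<beta>\<^sup>2 * real K * (real K - 1) * (\<sigma>\<^sup>2 / real B + (real K - 1) * A)))"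
    using local_drift_bound[OF i, of t] K_pos unfolding S_def A_def by (intro mult_left_mono) auto
  finally show ?thesis
    using K_pos B_pos by (simp add: power2_eq_square field_simps)
qed


lemma direction_error_sq_le:
  "(norm (delta_avg t \<omega> - grad_avg (z_at t \<omega>)))\<^sup>2
    \<le> (1 / real N) * (\<Sum>i<N. (norm (delta_at t i \<omega> - gradf i (z_at t \<omega>) - c_at t i \<omega>))\<^sup>2)"
proof -
  have "(norm (delta_avg t \<omega> - grad_avg (z_at t \<omega>)))\<^sup>2
      = (1 / real N)\<^sup>2 * (norm (\<Sum>i<N. delta_at t i \<omega> - gradf i (z_at t \<omega>) - c_at t i \<omega>))\<^sup>2"
    unfolding direction_error_avg by (simp add: power_mult_distrib power_divide)
  also have "\<dots> \<le> (1 / real N)\<^sup>2 * (real N * (\<Sum>i<N. (norm (delta_at t i \<omega> - gradf i (z_at t \<omega>) - c_at t i \<omega>))\<^sup>2))"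
    using norm_sum_sq_le[of _ "{..<N}"] by (intro mult_left_mono) auto
  finally show ?thesis using N_pos by (simp add: power2_eq_square)
qed

lemma expected_direction_error_le:
  "(\<integral>\<omega>. (norm (delta_avg t \<omega> - grad_avg (z_at t \<omega>)))\<^sup>2 \<partial>M)
    \<le> (1 / real N) * (\<Sum>i<N. \<integral>\<omega>. (norm (delta_at t i \<omega> - gradf i (z_at t \<omega>) - c_at t i \<omega>))\<^sup>2 \<partial>M)"
proof -
  define e where "e i \<omega> = (norm (delta_at t i \<omega> - gradf i (z_at t \<omega>) - c_at t i \<omega>))\<^sup>2" for i \<omega>
  have e: "integrable M (e i)" if "i < N" for i
    unfolding e_def using that by (intro square_integrableD(2) square_integrable_diff square_integrable_delta_at
        square_integrable_gradf square_integrable_z_at square_integrable_c_at)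
  then have "integrable M (\<lambda>\<omega>. (1 / real N) * (\<Sum>i<N. e i \<omega>))"
    by (intro Bochner_Integration.integrable_mult_right Bochner_Integration.integrable_sum) auto
  moreover have "integrable M (\<lambda>\<omega>. (norm (delta_avg t \<omega> - grad_avg (z_at t \<omega>)))\<^sup>2)"
    by (intro square_integrableD(2) square_integrable_diff square_integrable_delta_avg
        square_integrable_grad_avg square_integrable_z_at)
  ultimately have "(\<integral>\<omega>. (norm (delta_avg t \<omega> - grad_avg (z_at t \<omega>)))\<^sup>2 \<partial>M)
      \<le> (\<integral>\<omega>. (1 / real N) * (\<Sum>i<N. e i \<omega>) \<partial>M)"
    using direction_error_sq_le unfolding e_def by (intro integral_mono)
  also have "\<dots> = (1 / real N) * (\<Sum>i<N. \<integral>\<omega>. e i \<omega> \<partial>M)"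
    using e by (simp add: Bochner_Integration.integral_sum)
  finally show ?thesis unfolding e_def .
qed

lemma expected_grad_control_sq_le:
  assumes i: "i < N"
  shows "(\<integral>\<omega>. (norm (gradf i (z_at t \<omega>) + c_at t i \<omega>))\<^sup>2 \<partial>M)
    \<le> 2 * (\<integral>\<omega>. (norm (gradf i (z_at t \<omega>) + c_at t i \<omega> - grad_avg (z_at t \<omega>)))\<^sup>2 \<partial>M)
      + 2 * (\<integral>\<omega>. (norm (grad_avg (z_at t \<omega>)))\<^sup>2 \<partial>M)"
proof -
  have grad_c: "square_integrable M (\<lambda>\<omega>. gradf i (z_at t \<omega>) + c_at t i \<omega>)"
    using i by (intro square_integrable_add square_integrable_gradf square_integrable_z_at square_integrable_c_at)
  have grad: "square_integrable M (\<lambda>\<omega>. grad_avg (z_at t \<omega>))"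
    by (intro square_integrable_grad_avg square_integrable_z_at)
  note sq = square_integrable_diff[OF grad_c grad] grad grad_c
  have "(\<integral>\<omega>. (norm (gradf i (z_at t \<omega>) + c_at t i \<omega>))\<^sup>2 \<partial>M)
      \<le> (\<integral>\<omega>. 2 * (norm (gradf i (z_at t \<omega>) + c_at t i \<omega> - grad_avg (z_at t \<omega>)))\<^sup>2
        + 2 * (norm (grad_avg (z_at t \<omega>)))\<^sup>2 \<partial>M)"
  proof (rule integral_mono)
    fix \<omega>
    show "(norm (gradf i (z_at t \<omega>) + c_at t i \<omega>))\<^sup>2 \<le> 2 * (norm (gradf i (z_at t \<omega>) + c_at t i \<omega>
        - grad_avg (z_at t \<omega>)))\<^sup>2 + 2 * (norm (grad_avg (z_at t \<omega>)))\<^sup>2"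
      using norm_add_sq_le[of "gradf i (z_at t \<omega>) + c_at t i \<omega> - grad_avg (z_at t \<omega>)" "grad_avg (z_at t \<omega>)"]
      by simp
  qed (use square_integrableD(2)[OF sq(1)] square_integrableD(2)[OF sq(2)] square_integrableD(2)[OF sq(3)] in auto)
  then show ?thesis
    using square_integrableD(2)[OF sq(1)] square_integrableD(2)[OF sq(2)] by simp
qed

lemma direction_error_bound:
  fixes t :: nat
  defines "G \<equiv> (\<integral>\<omega>. (norm (grad_avg (z_at t \<omega>)))\<^sup>2 \<partial>M)"
    and "E \<equiv> (1 / real N) * (\<Sum>i<N. \<integral>\<omega>. (norm (gradf i (z_at t \<omega>) + c_at t i \<omega> - grad_avg (z_at t \<omega>)))\<^sup>2 \<partial>M)"
  shows "(\<integral>\<omega>. (norm (delta_avg t \<omega> - grad_avg (z_at t \<omega>)))\<^sup>2 \<partial>M)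
    \<le> 24 * \<beta>\<^sup>2 * (real K)\<^sup>2 * L\<^sup>2 * (G + E) + 2 * \<sigma>\<^sup>2 / (real B * real K)
      + 6 * \<beta>\<^sup>2 * (real K)\<^sup>2 * L\<^sup>2 * \<sigma>\<^sup>2 / real B"
proof -
  define e where "e i = (\<integral>\<omega>. (norm (delta_at t i \<omega> - gradf i (z_at t \<omega>) - c_at t i \<omega>))\<^sup>2 \<partial>M)" for i
  define A where "A i = (\<integral>\<omega>. (norm (gradf i (z_at t \<omega>) + c_at t i \<omega>))\<^sup>2 \<partial>M)" for i
  define c1 where "c1 = 48 / 7 * L\<^sup>2 * \<beta>\<^sup>2 * (real K - 1) * \<sigma>\<^sup>2 / real B"
  define c2 where "c2 = 48 / 7 * L\<^sup>2 * \<beta>\<^sup>2 * (real K - 1)\<^sup>2"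
  have "(\<integral>\<omega>. (norm (delta_avg t \<omega> - grad_avg (z_at t \<omega>)))\<^sup>2 \<partial>M) \<le> (1 / real N) * (\<Sum>i<N. e i)"
    unfolding e_def by (rule expected_direction_error_le)
  also have "\<dots> \<le> (1 / real N) * (\<Sum>i<N. 2 * \<sigma>\<^sup>2 / (real K * real B) + c1 + c2 * A i)"
  proof (intro mult_left_mono sum_mono)
    fix i assume "i \<in> {..<N}"
    then have "e i
        \<le> 2 * \<sigma>\<^sup>2 / (real K * real B) + 48 / 7 * L\<^sup>2 * \<beta>\<^sup>2 * (real K - 1) * (\<sigma>\<^sup>2 / real B + (real K - 1) * A i)"
      unfolding e_def A_def by (intro client_error_bound) simp
    also have "\<dots> = 2 * \<sigma>\<^sup>2 / (real K * real B) + c1 + c2 * A i"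
      unfolding c1_def c2_def using B_pos by (simp add: field_simps power2_eq_square)
    finally show "e i \<le> 2 * \<sigma>\<^sup>2 / (real K * real B) + c1 + c2 * A i" .
  qed simp
  also have "\<dots> = 2 * \<sigma>\<^sup>2 / (real K * real B) + c1 + c2 * ((1 / real N) * (\<Sum>i<N. A i))"
    using N_pos by (simp add: sum.distrib sum_distrib_left[symmetric] field_simps)
  also have "c2 * ((1 / real N) * (\<Sum>i<N. A i)) \<le> c2 * ((1 / real N) * (\<Sum>i<N. 2 * (\<integral>\<omega>. (norm (gradf i (z_at t \<omega>)
      + c_at t i \<omega> - grad_avg (z_at t \<omega>)))\<^sup>2 \<partial>M) + 2 * G))"
    unfolding A_def G_def c2_def using expected_grad_control_sq_le
    by (intro mult_left_mono sum_mono) auto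
  also have "\<dots> = c2 * (2 * (E + G))"
    using N_pos by (simp add: E_def sum.distrib sum_distrib_left[symmetric] field_simps)
  also have "c2 * (2 * (E + G)) \<le> 24 * \<beta>\<^sup>2 * (real K)\<^sup>2 * L\<^sup>2 * (G + E)"
  proof -
    have "0 \<le> E + G"
      unfolding E_def G_def by (intro add_nonneg_nonneg mult_nonneg_nonneg sum_nonneg integral_nonneg_AE) auto
    then have "96 / 7 * (real K - 1)\<^sup>2 * (L\<^sup>2 * \<beta>\<^sup>2 * (E + G)) \<le> 24 * (real K)\<^sup>2 * (L\<^sup>2 * \<beta>\<^sup>2 * (E + G))"
      using K_pos by (intro mult_right_mono drift_constants_le) auto
    then show ?thesis unfolding c2_def by (simp add: algebra_simps)
  qed
  also have "c1 \<le> 6 * \<beta>\<^sup>2 * (real K)\<^sup>2 * L\<^sup>2 * \<sigma>\<^sup>2 / real B"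
  proof -
    have "48 / 7 * (real K - 1) * (L\<^sup>2 * \<beta>\<^sup>2 * \<sigma>\<^sup>2 / real B) \<le> 6 * (real K)\<^sup>2 * (L\<^sup>2 * \<beta>\<^sup>2 * \<sigma>\<^sup>2 / real B)"
      using K_pos by (intro mult_right_mono drift_constants_le) auto
    then show ?thesis unfolding c1_def by (simp add: algebra_simps)
  qed
  finally show ?thesis by (simp add: mult.commute)
qed

section \<open>Expected descent\<close>

definition descent_bound :: "real \<Rightarrow> nat \<Rightarrow> 'w \<Rightarrow> real" where
  "descent_bound Bh t \<omega> =
     - (\<alpha> - 2 * (\<rho> + L) * \<alpha>\<^sup>2) / 4 * (norm (Gmap \<alpha> h (z_at t \<omega>) (delta_avg t \<omega>)))\<^sup>2
     - \<alpha> / 8 * (norm (Gmap \<alpha> h (z_at t \<omega>) (grad_avg (z_at t \<omega>))))\<^sup>2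
     - \<alpha> / 16 * (norm (grad_avg (z_at t \<omega>)))\<^sup>2 + \<alpha> * Bh / 8
     + \<alpha> * (2 + 1 / (1 - \<alpha> * \<rho>)\<^sup>2) / 2 * (norm (delta_avg t \<omega> - grad_avg (z_at t \<omega>)))\<^sup>2"

lemma objective_step_le_descent_bound:
  fixes f :: "'a \<Rightarrow> real"
  assumes f_upper: "\<And>x z. f x \<le> f z + grad_avg z \<bullet> (x - z) + L / 2 * (norm (x - z))\<^sup>2"
    and subgrad_bound: "\<forall>x. \<forall>v\<in>frechet_subdiff h x. (norm v)\<^sup>2 \<le> Bh"
  shows "f (z_at (Suc t) \<omega>) + h (z_at (Suc t) \<omega>) - (f (z_at t \<omega>) + h (z_at t \<omega>)) \<le> descent_bound Bh t \<omega>"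
  unfolding server_pt_Suc descent_bound_def
  using prox_step_descent[OF f_upper subgrad_bound, of "z_at t \<omega>" "delta_avg t \<omega>"] .

lemma square_integrable_Gmap:
  "square_integrable M z \<Longrightarrow> square_integrable M u \<Longrightarrow> square_integrable M (\<lambda>\<omega>. Gmap \<alpha> h (z \<omega>) (u \<omega>))"
  unfolding Gmap_def by (intro square_integrable_scaleR square_integrable_diff square_integrable_prox)

lemma integrable_descent_bound: "integrable M (descent_bound Bh t)"
proof -
  note sq = square_integrable_z_at square_integrable_delta_avg square_integrable_grad_avg[OF square_integrable_z_at]
  show ?thesis
    unfolding descent_bound_def
    using square_integrableD(2)[OF square_integrable_Gmap[OF sq(1,2)]]
      square_integrableD(2)[OF square_integrable_Gmap[OF sq(1,3)]] square_integrableD(2)[OF sq(3)]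
      square_integrableD(2)[OF square_integrable_diff[OF sq(2,3)]]
    by (intro Bochner_Integration.integrable_add Bochner_Integration.integrable_diff
        Bochner_Integration.integrable_mult_right) auto
qed

lemma integrable_objective:
  fixes f :: "'a \<Rightarrow> real"
  assumes f_upper: "\<And>x z. f x \<le> f z + grad_avg z \<bullet> (x - z) + L / 2 * (norm (x - z))\<^sup>2"
    and subgrad_bound: "\<forall>x. \<forall>v\<in>frechet_subdiff h x. (norm v)\<^sup>2 \<le> Bh"
    and f_cont: "continuous_on UNIV f" and lower: "\<And>x. m \<le> f x + h x"
  shows "integrable M (\<lambda>\<omega>. f (z_at t \<omega>) + h (z_at t \<omega>))"
proof (induction t)
  case 0
  then show ?case by (simp add: server_pt_def)
next
  case (Suc t)
  show ?case
  proof (rule Bochner_Integration.integrable_bound)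
    show "integrable M (\<lambda>\<omega>. \<bar>m\<bar> + \<bar>f (z_at t \<omega>) + h (z_at t \<omega>)\<bar> + \<bar>descent_bound Bh t \<omega>\<bar>)"
      using Suc integrable_descent_bound by (intro Bochner_Integration.integrable_add) (auto intro: integrable_abs)
    show "(\<lambda>\<omega>. f (z_at (Suc t) \<omega>) + h (z_at (Suc t) \<omega>)) \<in> borel_measurable M"
      using square_integrableD(1)[OF square_integrable_z_at]
      by (intro borel_measurable_continuous_on[where f="\<lambda>x. f x + h x"] continuous_intros f_cont continuous_on_h)
    show "AE \<omega> in M. norm (f (z_at (Suc t) \<omega>) + h (z_at (Suc t) \<omega>))
        \<le> norm (\<bar>m\<bar> + \<bar>f (z_at t \<omega>) + h (z_at t \<omega>)\<bar> + \<bar>descent_bound Bh t \<omega>\<bar>)"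
      using lower objective_step_le_descent_bound[OF f_upper subgrad_bound, where t=t]
      by (intro AE_I2) (smt (verit) real_norm_def)
  qed
qed

lemma expected_descent:
  fixes f :: "'a \<Rightarrow> real"
  assumes f_upper: "\<And>x z. f x \<le> f z + grad_avg z \<bullet> (x - z) + L / 2 * (norm (x - z))\<^sup>2"
    and subgrad_bound: "\<forall>x. \<forall>v\<in>frechet_subdiff h x. (norm v)\<^sup>2 \<le> Bh"
    and f_cont: "continuous_on UNIV f" and lower: "\<And>x. m \<le> f x + h x"
  defines "\<delta> \<equiv> 1 / (1 - \<alpha> * \<rho>)\<^sup>2"
  shows "(\<integral>\<omega>. f (z_at (Suc t) \<omega>) + h (z_at (Suc t) \<omega>) - (f (z_at t \<omega>) + h (z_at t \<omega>)) \<partial>M)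
   \<le> - (\<alpha> - 2 * (\<rho> + L) * \<alpha>\<^sup>2) / 4 * (\<integral>\<omega>. (norm (Gmap \<alpha> h (z_at t \<omega>) (delta_avg t \<omega>)))\<^sup>2 \<partial>M)
      - \<alpha> / 8 * (\<integral>\<omega>. (norm (Gmap \<alpha> h (z_at t \<omega>) (grad_avg (z_at t \<omega>))))\<^sup>2 \<partial>M)
      - (\<alpha> / 16 - 12 * (2 + \<delta>) * \<alpha> * \<beta>\<^sup>2 * (real K)\<^sup>2 * L\<^sup>2) * (\<integral>\<omega>. (norm (grad_avg (z_at t \<omega>)))\<^sup>2 \<partial>M)
      + \<alpha> * Bh / 8
      + 12 * (2 + \<delta>) * \<alpha> * \<beta>\<^sup>2 * (real K)\<^sup>2 * L\<^sup>2 * ((1 / real N) * (\<Sum>i<N. \<integral>\<omega>.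
            (norm (gradf i (z_at t \<omega>) + c_at t i \<omega> - grad_avg (z_at t \<omega>)))\<^sup>2 \<partial>M))
      + \<alpha> * (2 + \<delta>) * (1 + 3 * \<beta>\<^sup>2 * (real K)^3 * L\<^sup>2) * \<sigma>\<^sup>2 / (real B * real K)"
proof -
  define a1 where "a1 = (\<integral>\<omega>. (norm (Gmap \<alpha> h (z_at t \<omega>) (delta_avg t \<omega>)))\<^sup>2 \<partial>M)"
  define a2 where "a2 = (\<integral>\<omega>. (norm (Gmap \<alpha> h (z_at t \<omega>) (grad_avg (z_at t \<omega>))))\<^sup>2 \<partial>M)"
  define G where "G = (\<integral>\<omega>. (norm (grad_avg (z_at t \<omega>)))\<^sup>2 \<partial>M)"
  define E where "E = (1 / real N) * (\<Sum>i<N. \<integral>\<omega>. (norm (gradf i (z_at t \<omega>) + c_at t i \<omega> - grad_avg (z_at t \<omega>)))\<^sup>2 \<partial>M)"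
  define e where "e = (\<integral>\<omega>. (norm (delta_avg t \<omega> - grad_avg (z_at t \<omega>)))\<^sup>2 \<partial>M)"
  note sq = square_integrable_z_at square_integrable_delta_avg square_integrable_grad_avg[OF square_integrable_z_at]
  have "(\<integral>\<omega>. f (z_at (Suc t) \<omega>) + h (z_at (Suc t) \<omega>) - (f (z_at t \<omega>) + h (z_at t \<omega>)) \<partial>M)
      \<le> (\<integral>\<omega>. descent_bound Bh t \<omega> \<partial>M)"
    using integrable_objective[OF f_upper subgrad_bound f_cont lower] integrable_descent_bound
      objective_step_le_descent_bound[OF f_upper subgrad_bound]
    by (intro integral_mono Bochner_Integration.integrable_diff) auto
  also have "(\<integral>\<omega>. descent_bound Bh t \<omega> \<partial>M)
      = - (\<alpha> - 2 * (\<rho> + L) * \<alpha>\<^sup>2) / 4 * a1 - \<alpha> / 8 * a2 - \<alpha> / 16 * G + \<alpha> * Bh / 8 + \<alpha> * (2 + \<delta>) / 2 * e"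
    unfolding descent_bound_def a1_def a2_def G_def e_def \<delta>_def
    using square_integrableD(2)[OF square_integrable_Gmap[OF sq(1,2)]]
      square_integrableD(2)[OF square_integrable_Gmap[OF sq(1,3)]] square_integrableD(2)[OF sq(3)]
      square_integrableD(2)[OF square_integrable_diff[OF sq(2,3)]]
    by (simp add: Bochner_Integration.integral_add Bochner_Integration.integral_diff
        Bochner_Integration.integrable_add Bochner_Integration.integrable_diff P.prob_space)
  also have "\<alpha> * (2 + \<delta>) / 2 * e \<le> \<alpha> * (2 + \<delta>) / 2 * (24 * \<beta>\<^sup>2 * (real K)\<^sup>2 * L\<^sup>2 * (G + E)
      + 2 * \<sigma>\<^sup>2 / (real B * real K) + 6 * \<beta>\<^sup>2 * (real K)\<^sup>2 * L\<^sup>2 * \<sigma>\<^sup>2 / real B)"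
    unfolding e_def G_def E_def \<delta>_def using alpha_pos by (intro mult_left_mono direction_error_bound) auto
  also have "\<dots> = 12 * (2 + \<delta>) * \<alpha> * \<beta>\<^sup>2 * (real K)\<^sup>2 * L\<^sup>2 * G + 12 * (2 + \<delta>) * \<alpha> * \<beta>\<^sup>2 * (real K)\<^sup>2 * L\<^sup>2 * E
      + \<alpha> * (2 + \<delta>) * (1 + 3 * \<beta>\<^sup>2 * (real K)^3 * L\<^sup>2) * \<sigma>\<^sup>2 / (real B * real K)"
    using B_pos K_pos by (simp add: field_simps power2_eq_square power3_eq_cube)
  finally show ?thesis unfolding a1_def[symmetric] a2_def[symmetric] G_def[symmetric] E_def[symmetric]
    by (simp add: left_diff_distrib)
qed

end

lemma mean_upper_quadratic:
  fixes fi :: "nat \<Rightarrow> 'a::real_inner \<Rightarrow> real"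
  assumes "\<forall>i<N. \<forall>x y. fi i x - fi i y - gradf i y \<bullet> (x - y) \<le> L / 2 * (norm (x - y))\<^sup>2" and "N > 0"
  shows "(1 / real N) * (\<Sum>i<N. fi i x)
    \<le> (1 / real N) * (\<Sum>i<N. fi i z) + ((1 / real N) *\<^sub>R (\<Sum>i<N. gradf i z)) \<bullet> (x - z) + L / 2 * (norm (x - z))\<^sup>2"
proof -
  have "(\<Sum>i<N. fi i x - fi i z - gradf i z \<bullet> (x - z)) \<le> real (card {..<N}) * (L / 2 * (norm (x - z))\<^sup>2)"
    using assms(1) by (intro sum_bounded_above) auto
  then have "(\<Sum>i<N. fi i x) - (\<Sum>i<N. fi i z) - (\<Sum>i<N. gradf i z) \<bullet> (x - z) \<le> real N * (L / 2 * (norm (x - z))\<^sup>2)"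
    by (simp add: sum_subtractf inner_sum_left)
  then show ?thesis
    using assms(2) by (simp add: field_simps)
qed

theorem lemma1:
  fixes M :: "'w measure" and D :: "nat \<Rightarrow> 'b measure"
    and X :: "nat \<Rightarrow> nat \<Rightarrow> nat \<Rightarrow> nat \<Rightarrow> 'w \<Rightarrow> 'b"
    and F :: "nat \<Rightarrow> 'a::euclidean_space \<Rightarrow> 'b \<Rightarrow> real"
    and gF :: "nat \<Rightarrow> 'a \<Rightarrow> 'b \<Rightarrow> 'a"
    and fi :: "nat \<Rightarrow> 'a \<Rightarrow> real" and gradf :: "nat \<Rightarrow> 'a \<Rightarrow> 'a"
    and h :: "'a \<Rightarrow> real"
    and N K B :: nat and L \<rho> Bh \<sigma> \<alpha> \<beta> :: real
    and z0 :: 'a and c0 :: "nat \<Rightarrow> 'a" and t :: nat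
  defines "gradfbar \<equiv> \<lambda>x. (1 / real N) *\<^sub>R (\<Sum>i<N. gradf i x)"
    and "\<phi> \<equiv> \<lambda>x. (1 / real N) * (\<Sum>i<N. fi i x) + h x"
    and "zz \<equiv> \<lambda>s \<omega>. fst (fedcanon gF B \<alpha> \<beta> K N h z0 c0 (\<lambda>s i k b. X s i k b \<omega>) s)"
    and "cc \<equiv> \<lambda>s \<omega>. snd (fedcanon gF B \<alpha> \<beta> K N h z0 c0 (\<lambda>s i k b. X s i k b \<omega>) s)"
    and "Dbar \<equiv> \<lambda>s \<omega>. fc_Dbar gF B \<beta> K N (fedcanon gF B \<alpha> \<beta> K N h z0 c0 (\<lambda>s i k b. X s i k b \<omega>) s)
                         (\<lambda>i k b. X s i k b \<omega>)"
    and "\<delta> \<equiv> 1 / (1 - \<alpha> * \<rho>)\<^sup>2"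
  assumes N_pos: "N > 0" and K_pos: "K > 0" and B_pos: "B > 0"
    and M_prob: "prob_space M"
    and D_prob: "\<forall>i<N. prob_space (D i)"
    and X_indep: "prob_space.indep_vars M (\<lambda>(s, i, k, b). D i) (\<lambda>(s, i, k, b). X s i k b)
                    {(s, i, k, b). i < N \<and> k < K \<and> b < B}"
    and X_distr: "\<forall>s i k b. i < N \<longrightarrow> k < K \<longrightarrow> b < B \<longrightarrow> distr M (D i) (X s i k b) = D i"
    and f_expect: "\<forall>i<N. \<forall>x. integrable (D i) (F i x) \<and> fi i x = integral\<^sup>L (D i) (F i x)"
    and F_grad: "\<forall>i<N. \<forall>\<xi>\<in>space (D i). \<forall>x.
                   ((\<lambda>y. F i y \<xi>) has_derivative (\<lambda>v. gF i x \<xi> \<bullet> v)) (at x)"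
    and f_grad: "\<forall>i<N. \<forall>x. (fi i has_derivative (\<lambda>v. gradf i x \<bullet> v)) (at x)"
    and A1: "bdd_below (range \<phi>)"
    and A2_L: "L > 0"
    and A2_upper: "\<forall>i<N. \<forall>x y. fi i x - fi i y - gradf i y \<bullet> (x - y) \<le> L / 2 * (norm (x - y))\<^sup>2"
    and A2_lip: "\<forall>i<N. \<forall>x y. norm (gradf i x - gradf i y) \<le> L * norm (x - y)"
    and A3_rho: "\<rho> \<ge> 0"
    and A3_wconvex: "convex_on UNIV (\<lambda>x. h x + \<rho> / 2 * (norm x)\<^sup>2)"
    and A3_closed: "closed {p. h (fst p) \<le> snd p}"
    and A3_subgrad: "\<forall>z. \<forall>v\<in>frechet_subdiff h z. (norm v)\<^sup>2 \<le> Bh"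
    and A4_meas: "\<forall>i<N. (\<lambda>p. gF i (fst p) (snd p)) \<in> borel_measurable (borel \<Otimes>\<^sub>M D i)"
    and A4_unbiased: "\<forall>i<N. \<forall>x. integrable (D i) (gF i x) \<and> integral\<^sup>L (D i) (gF i x) = gradf i x"
    and A4_var: "\<forall>i<N. \<forall>x. integrable (D i) (\<lambda>\<xi>. (norm (gF i x \<xi> - gradf i x))\<^sup>2)
                   \<and> integral\<^sup>L (D i) (\<lambda>\<xi>. (norm (gF i x \<xi> - gradf i x))\<^sup>2) \<le> \<sigma>\<^sup>2"
    and c0_sum: "(\<Sum>i<N. c0 i) = 0"
    and alpha_pos: "\<alpha> > 0" and alpha_rho: "\<alpha> * \<rho> < 1"
    and beta_pos: "\<beta> > 0"
    and beta_bound: "24 * real K * (real K - 1) * L\<^sup>2 * \<beta>\<^sup>2 \<le> 1"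
  shows "integral\<^sup>L M (\<lambda>\<omega>. \<phi> (zz (Suc t) \<omega>) - \<phi> (zz t \<omega>))
   \<le> - (\<alpha> - 2 * (\<rho> + L) * \<alpha>\<^sup>2) / 4 * integral\<^sup>L M (\<lambda>\<omega>. (norm (Gmap \<alpha> h (zz t \<omega>) (Dbar t \<omega>)))\<^sup>2)
      - \<alpha> / 8 * integral\<^sup>L M (\<lambda>\<omega>. (norm (Gmap \<alpha> h (zz t \<omega>) (gradfbar (zz t \<omega>))))\<^sup>2)
      - (\<alpha> / 16 - 12 * (2 + \<delta>) * \<alpha> * \<beta>\<^sup>2 * (real K)\<^sup>2 * L\<^sup>2)
          * integral\<^sup>L M (\<lambda>\<omega>. (norm (gradfbar (zz t \<omega>)))\<^sup>2)
      + \<alpha> * Bh / 8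
      + 12 * (2 + \<delta>) * \<alpha> * \<beta>\<^sup>2 * (real K)\<^sup>2 * L\<^sup>2 * ((1 / real N) * (\<Sum>i<N. integral\<^sup>L M
            (\<lambda>\<omega>. (norm (gradf i (zz t \<omega>) + cc t \<omega> i - gradfbar (zz t \<omega>)))\<^sup>2)))
      + \<alpha> * (2 + \<delta>) * (1 + 3 * \<beta>\<^sup>2 * (real K)^3 * L\<^sup>2) * \<sigma>\<^sup>2 / (real B * real K)"
proof -
  interpret fedcanon_model h \<rho> \<alpha> M D X gF gradf N K B L \<sigma> \<beta> z0 c0
    by (intro fedcanon_model.intro weakly_convex_prox.intro fedcanon_model_axioms.intro; fact)
  define f where "f x = (1 / real N) * (\<Sum>i<N. fi i x)" for x
  have f_upper: "f x \<le> f z + grad_avg z \<bullet> (x - z) + L / 2 * (norm (x - z))\<^sup>2" for x z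
    using mean_upper_quadratic[OF A2_upper N_pos] by (simp add: f_def grad_avg_def)
  have "continuous_on UNIV (fi i)" if "i < N" for i
    using f_grad that by (intro continuous_at_imp_continuous_on ballI has_derivative_continuous) blast
  then have f_cont: "continuous_on UNIV f" unfolding f_def by (intro continuous_intros) auto
  obtain m where lower: "\<And>x. m \<le> f x + h x"
    using A1 unfolding bdd_below_def \<phi>_def f_def by auto
  have "zz = (\<lambda>s \<omega>. z_at s \<omega>)" "cc = (\<lambda>s \<omega> i. c_at s i \<omega>)" "Dbar = delta_avg" "gradfbar = grad_avg"
    by (simp_all add: fun_eq_iff zz_def cc_def Dbar_def gradfbar_def server_pt_def control_def path_def grad_avg_def)
  then show ?thesis
    using expected_descent[OF f_upper A3_subgrad f_cont lower, of t]
    unfolding \<phi>_def f_def \<delta>_def by simp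
qed

end
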